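(* Let $q$ be an odd prime and let $(G,H,T)$ be the envelope of a right conjugacy closed loop of order $2q$. Let $K$ be a subgroup with $H\lneq K\lneq G$, $|G:K|=q$ and $|K:H|=2$. If $N_G(K)=K$, then there is $M\trianglelefteq G$ with $|G:HM|=2$.
   Context: For a finite loop $\mathcal{L}$ with identity $e$: $G=\langle R_a\mid a\in\mathcal L\rangle$ with $R_a\colon x\mapsto xa$, $H$ the stabilizer of $e$ in $G$, $T=\{R_a\}$; $(G,H,T)$ is the envelope; the loop is right conjugacy closed if $T$ is a union of conjugacy classes of $G$. *)

theory Defs
  imports "HOL-Algebra.Algebra"
begin

definition is_loop :: "'a set \<Rightarrow> ('a \<Rightarrow> 'a \<Rightarrow> 'a) \<Rightarrow> 'a \<Rightarrow> bool" where
  "is_loop L m e \<longleftrightarrow> e \<in> L \<and> (\<forall>x\<in>L. \<forall>y\<in>L. m x y \<in> L)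
     \<and> (\<forall>x\<in>L. m e x = x \<and> m x e = x)
     \<and> (\<forall>a\<in>L. \<forall>b\<in>L. \<exists>!x. x \<in> L \<and> m a x = b)
     \<and> (\<forall>a\<in>L. \<forall>b\<in>L. \<exists>!y. y \<in> L \<and> m y a = b)"

definition right_mult :: "'a set \<Rightarrow> ('a \<Rightarrow> 'a \<Rightarrow> 'a) \<Rightarrow> 'a \<Rightarrow> ('a \<Rightarrow> 'a)" where
  "right_mult L m a = (\<lambda>x\<in>L. m x a)"

definition env_T :: "'a set \<Rightarrow> ('a \<Rightarrow> 'a \<Rightarrow> 'a) \<Rightarrow> ('a \<Rightarrow> 'a) set" where
  "env_T L m = right_mult L m ` L"

definition env_G :: "'a set \<Rightarrow> ('a \<Rightarrow> 'a \<Rightarrow> 'a) \<Rightarrow> ('a \<Rightarrow> 'a) monoid" where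
  "env_G L m = (BijGroup L)\<lparr>carrier := generate (BijGroup L) (env_T L m)\<rparr>"

definition env_H :: "'a set \<Rightarrow> ('a \<Rightarrow> 'a \<Rightarrow> 'a) \<Rightarrow> 'a \<Rightarrow> ('a \<Rightarrow> 'a) set" where
  "env_H L m e = {g \<in> carrier (env_G L m). g e = e}"

definition rcc_loop :: "'a set \<Rightarrow> ('a \<Rightarrow> 'a \<Rightarrow> 'a) \<Rightarrow> 'a \<Rightarrow> bool" where
  "rcc_loop L m e \<longleftrightarrow> is_loop L m e \<and>
     (\<forall>g\<in>carrier (env_G L m). \<forall>t\<in>env_T L m.
        g \<otimes>\<^bsub>env_G L m\<^esub> t \<otimes>\<^bsub>env_G L m\<^esub> inv\<^bsub>env_G L m\<^esub> g \<in> env_T L m)"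

end

theory Submission
  imports Defs
begin

text \<open>K is the stabiliser of a block {e, f} of size two, so the pairs {a, a f} form a
  G-invariant partition of L. An element c of order q is fixed-point-free and the c-orbit of e
  meets every pair once. If some normal subgroup N has an orbit Y through e with q \<le> |Y| < 2q,
  then Y is a block with |L| = 2|Y|, its setwise stabiliser M is normal of index two and contains
  H, and HM = M. Such an N is found by counting the elements of T that commute with c: if R f is
  not central, these lie in the centraliser N of the conjugacy class of c and number q, and if N
  is transitive then the cyclic group generated by c is normal; if R f is central, q \<ge> 5 again
  forces c to generate a normal subgroup, while q = 3 would make K the kernel of the action on
  the pairs, contradicting N_G(K) = K.\<close>

lemma (in group) inv_mult_cancel_left [simp]:
  "x \<in> carrier G \<Longrightarrow> y \<in> carrier G \<Longrightarrow> inv x \<otimes> (x \<otimes> y) = y"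
  by (simp add: m_assoc [symmetric])

lemma (in group) mult_inv_cancel_left [simp]:
  "x \<in> carrier G \<Longrightarrow> y \<in> carrier G \<Longrightarrow> x \<otimes> (inv x \<otimes> y) = y"
  by (simp add: m_assoc [symmetric])

lemma (in group) conj_eq_iff_commute:
  assumes "x \<in> carrier G" "y \<in> carrier G"
  shows "x \<otimes> y \<otimes> inv x = y \<longleftrightarrow> x \<otimes> y = y \<otimes> x"
proof
  assume "x \<otimes> y \<otimes> inv x = y"
  then show "x \<otimes> y = y \<otimes> x"
    using assms by (metis inv_closed inv_solve_right m_closed)
qed (use assms in \<open>simp add: m_assoc\<close>)

lemma (in group) commute_inv:
  assumes "x \<in> carrier G" "y \<in> carrier G" "x \<otimes> y = y \<otimes> x"
  shows "inv x \<otimes> y = y \<otimes> inv x"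
proof -
  have "inv x \<otimes> (y \<otimes> x) \<otimes> inv x = inv x \<otimes> (x \<otimes> y) \<otimes> inv x" using assms(3) by simp
  then show ?thesis using assms(1,2) by (simp add: m_assoc)
qed

lemma (in group) commute_mult:
  assumes "a \<in> carrier G" "b \<in> carrier G" "d \<in> carrier G"
    and "a \<otimes> d = d \<otimes> a" "b \<otimes> d = d \<otimes> b"
  shows "a \<otimes> b \<otimes> d = d \<otimes> (a \<otimes> b)"
  using assms by (metis m_assoc)

lemma (in group) conj_conj:
  assumes "a \<in> carrier G" "b \<in> carrier G" "x \<in> carrier G"
  shows "a \<otimes> (b \<otimes> x \<otimes> inv b) \<otimes> inv a = a \<otimes> b \<otimes> x \<otimes> inv (a \<otimes> b)"
  using assms by (simp add: m_assoc inv_mult_group)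

lemma (in group) conj_commute_iff:
  assumes "a \<in> carrier G" "u \<in> carrier G" "v \<in> carrier G"
  shows "(a \<otimes> u \<otimes> inv a) \<otimes> (a \<otimes> v \<otimes> inv a) = (a \<otimes> v \<otimes> inv a) \<otimes> (a \<otimes> u \<otimes> inv a)
         \<longleftrightarrow> u \<otimes> v = v \<otimes> u"
proof -
  have "(a \<otimes> u \<otimes> inv a) \<otimes> (a \<otimes> v \<otimes> inv a) = a \<otimes> (u \<otimes> v) \<otimes> inv a"
    and "(a \<otimes> v \<otimes> inv a) \<otimes> (a \<otimes> u \<otimes> inv a) = a \<otimes> (v \<otimes> u) \<otimes> inv a"
    using assms by (simp_all add: m_assoc)
  then show ?thesis using assms by simp
qed

lemma (in group) conj_eq_commuting_imp_eq:
  assumes "a \<in> carrier G" "t \<in> carrier G" "x \<in> carrier G" "x \<otimes> a = a \<otimes> x"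
    and "a \<otimes> t \<otimes> inv a = x"
  shows "t = x"
proof -
  have "t = inv a \<otimes> (a \<otimes> t \<otimes> inv a) \<otimes> a" using assms(1,2) by (simp add: m_assoc)
  also have "\<dots> = inv a \<otimes> (x \<otimes> a)" using assms(1,3,5) by (simp add: m_assoc)
  finally show ?thesis using assms(1,3,4) by simp
qed

lemma (in group) pow_conj:
  assumes "g \<in> carrier G" "x \<in> carrier G"
  shows "(g \<otimes> x \<otimes> inv g) [^] (n::nat) = g \<otimes> x [^] n \<otimes> inv g"
  using assms by (induction n) (simp_all add: m_assoc)

lemma (in group) subgroup_nat_pow_closed:
  assumes "subgroup H G" "x \<in> H" shows "x [^] (n::nat) \<in> H"
  using assms by (induction n) (auto intro: subgroup.one_closed subgroup.m_closed)

lemma (in group) pow_mod_period: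
  assumes "x \<in> carrier G" "x [^] (q::nat) = \<one>"
  shows "x [^] n = x [^] (n mod q)"
proof -
  have "x [^] n = x [^] (q * (n div q) + n mod q)" by simp
  also have "\<dots> = x [^] (q * (n div q)) \<otimes> x [^] (n mod q)"
    using assms(1) by (simp add: nat_pow_mult)
  also have "x [^] (q * (n div q)) = \<one>"
    using assms by (simp add: nat_pow_pow [symmetric])
  finally show ?thesis using assms(1) by simp
qed

lemma (in group) pow_inverse_period:
  assumes "x \<in> carrier G" "x [^] (q::nat) = \<one>" "j \<le> q"
  shows "inv (x [^] j) = x [^] (q - j)"
  using assms by (metis inv_equality le_add_diff_inverse2 nat_pow_closed nat_pow_mult)

lemma (in group) generated_by_prime_pow:
  assumes "Factorial_Ring.prime (q::nat)" "x \<in> carrier G" "x [^] q = \<one>" "\<not> q dvd i"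
  shows "\<exists>j::nat. x = (x [^] i) [^] j"
proof -
  have "i \<noteq> 0" using assms(4) by (metis dvd_0_right)
  have "coprime i q" using prime_imp_coprime[OF assms(1,4)] by (simp add: ac_simps)
  then obtain u v where uv: "i * u = q * v + 1"
    using bezout_nat[OF \<open>i \<noteq> 0\<close>] by (metis coprime_iff_gcd_eq_1)
  have "(x [^] i) [^] u = x [^] (q * v + 1)"
    using assms(2) by (simp add: nat_pow_pow uv)
  also have "\<dots> = x [^] ((q * v + 1) mod q)"
    by (rule pow_mod_period[OF assms(2,3)])
  also have "(q * v + 1) mod q = 1"
    using prime_gt_1_nat[OF assms(1)] by (metis mod_less mod_mult_self4)
  finally show ?thesis using assms(2) by (metis nat_pow_eone)
qed

lemma (in group) not_pow_sym:
  assumes "Factorial_Ring.prime (q::nat)" "y \<in> carrier G" "y [^] q = \<one>" "x \<noteq> \<one>"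
    and "\<forall>k::nat. y \<noteq> x [^] k"
  shows "x \<noteq> y [^] (k::nat)"
proof
  assume x: "x = y [^] k"
  then have "\<not> q dvd k" using pow_mod_period[OF assms(2,3), of k] assms(4) by auto
  then obtain w :: nat where "y = (y [^] k) [^] w" using generated_by_prime_pow[OF assms(1-3)] by blast
  then show False using x assms(5) by metis
qed

lemma dvd_add_diff_imp_eq:
  fixes q l j :: nat
  assumes "q dvd l + (q - j)" "l < q" "j < q"
  shows "l = j"
proof -
  obtain k where k: "l + (q - j) = q * k" using assms(1) by (auto simp: dvd_def)
  have "0 < q * k" and "q * k < q * 2" using k assms(2,3) by linarith+
  then have "0 < k" "k < 2" by simp_all
  then have "k = 1" by simp
  then show ?thesis using k assms by simp
qed

lemma (in group) pow_eq_one_of_pow_eq: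
  assumes "x \<in> carrier G" "a \<le> b" "x [^] a = x [^] (b::nat)"
  shows "x [^] (b - a) = \<one>"
proof -
  have "x [^] (b - a) \<otimes> x [^] a = x [^] (b - a + a)"
    using assms(1) by (simp add: nat_pow_mult)
  also have "\<dots> = x [^] a" using assms(2,3) by simp
  finally have "x [^] (b - a) \<otimes> x [^] a = x [^] a" .
  then show ?thesis using assms(1) by simp
qed

lemma (in group) commute_of_commute_prime_pow:
  assumes "Factorial_Ring.prime (q::nat)" "x \<in> carrier G" "y \<in> carrier G" "x [^] q = \<one>"
    and "\<not> q dvd i" "x [^] (i::nat) \<otimes> y = y \<otimes> x [^] i"
  shows "x \<otimes> y = y \<otimes> x"
proof -
  obtain j :: nat where xj: "x = (x [^] i) [^] j"
    using generated_by_prime_pow[OF assms(1,2,4,5)] by blast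
  have "(x [^] i) [^] j \<otimes> y = y \<otimes> (x [^] i) [^] j"
    using group_commutes_pow[of "x [^] i" y j] assms by simp
  then show ?thesis by (simp only: xj [symmetric])
qed

lemma (in group) inj_on_pow_prime_period:
  assumes "Factorial_Ring.prime (q::nat)" "x \<in> carrier G" "x [^] q = \<one>" "x \<noteq> \<one>"
  shows "inj_on (\<lambda>i. x [^] i) {..<q}"
proof -
  have le: "a = b" if "a < q" "b < q" "a \<le> b" "x [^] a = x [^] b" for a b
  proof (rule ccontr)
    assume "a \<noteq> b"
    then have "\<not> q dvd (b - a)" using that by (auto dest: dvd_imp_le)
    then obtain j :: nat where xj: "x = (x [^] (b - a)) [^] j"
      using generated_by_prime_pow[OF assms(1-3)] by blast
    have "x [^] (b - a) = \<one>" using pow_eq_one_of_pow_eq that assms(2) by blast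
    then show False using xj assms(4) by (metis nat_pow_one)
  qed
  show ?thesis
  proof (rule inj_onI)
    fix a b assume "a \<in> {..<q}" "b \<in> {..<q}" "x [^] a = x [^] b"
    then show "a = b" using le[of a b] le[of b a] by (cases "a \<le> b") auto
  qed
qed

lemma (in group) inj_on_pow_products:
  assumes q: "Factorial_Ring.prime (q::nat)"
    and x: "x \<in> carrier G" "x [^] q = \<one>" "x \<noteq> \<one>"
    and y: "y \<in> carrier G" "y [^] q = \<one>" "\<forall>k::nat. y \<noteq> x [^] k"
  shows "inj_on (\<lambda>(i, j). x [^] i \<otimes> y [^] j) ({..<q} \<times> {..<q})"
proof (rule inj_onI, clarsimp)
  fix i j k l assume lt: "i < q" "j < q" "k < q" "l < q"
    and eq: "x [^] i \<otimes> y [^] j = x [^] k \<otimes> y [^] l"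
  have "inv (x [^] k) \<otimes> (x [^] i \<otimes> y [^] j) \<otimes> inv (y [^] j)
      = inv (x [^] k) \<otimes> (x [^] k \<otimes> y [^] l) \<otimes> inv (y [^] j)"
    using eq by simp
  then have "inv (x [^] k) \<otimes> x [^] i = y [^] l \<otimes> inv (y [^] j)"
    using x(1) y(1) by (simp add: m_assoc)
  then have xy: "x [^] (q - k + i) = y [^] (l + (q - j))"
    using x y lt by (simp add: pow_inverse_period nat_pow_mult)
  have "j = l"
  proof (rule ccontr)
    assume "j \<noteq> l"
    then have "\<not> q dvd l + (q - j)" using dvd_add_diff_imp_eq lt by metis
    then obtain w :: nat where yw: "y = (y [^] (l + (q - j))) [^] w"
      using generated_by_prime_pow[OF q y(1,2)] by blast
    have "y = x [^] ((q - k + i) * w)" using yw[unfolded xy [symmetric]] x by (simp add: nat_pow_pow)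
    then show False using y(3) by blast
  qed
  then have "x [^] i = x [^] k" using eq x y by simp
  then show "i = k \<and> j = l"
    using \<open>j = l\<close> inj_on_pow_prime_period[OF q x] lt by (auto dest: inj_onD)
qed

lemma (in group) inj_on_conj_pow:
  assumes q: "Factorial_Ring.prime (q::nat)" and d: "d \<in> carrier G" "d [^] q = \<one>"
    and t: "t \<in> carrier G" "t \<otimes> d \<noteq> d \<otimes> t"
  shows "inj_on (\<lambda>i. d [^] i \<otimes> t \<otimes> inv (d [^] i)) {..<q}"
proof -
  have le: "a = b" if ab: "a < q" "b < q" "a \<le> b"
    and eq: "d [^] a \<otimes> t \<otimes> inv (d [^] a) = d [^] b \<otimes> t \<otimes> inv (d [^] b)" for a b
  proof (rule ccontr)
    assume "a \<noteq> b"
    define s where "s = d [^] a \<otimes> t \<otimes> inv (d [^] a)"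
    have s: "s \<in> carrier G" using s_def d t by simp
    have "d [^] b = d [^] (b - a) \<otimes> d [^] a" using d ab by (simp add: nat_pow_mult)
    then have "d [^] (b - a) \<otimes> s \<otimes> inv (d [^] (b - a)) = s"
      using eq conj_conj[of "d [^] (b - a)" "d [^] a" t] d t s_def by simp
    then have "d [^] (b - a) \<otimes> s = s \<otimes> d [^] (b - a)" using conj_eq_iff_commute d s by simp
    moreover have "\<not> q dvd (b - a)" using ab \<open>a \<noteq> b\<close> by (auto dest: dvd_imp_le)
    ultimately have "s \<otimes> d = d \<otimes> s"
      using commute_of_commute_prime_pow[OF q d(1) s d(2)] by simp
    moreover have "d [^] a \<otimes> d \<otimes> inv (d [^] a) = d"
      using conj_eq_iff_commute[of "d [^] a" d] d by (simp add: nat_pow_comm[of d a 1, simplified])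
    ultimately have "t \<otimes> d = d \<otimes> t"
      using conj_commute_iff[of "d [^] a" t d] d t s_def by simp
    then show False using t by simp
  qed
  show ?thesis
  proof (rule inj_onI)
    fix a b assume "a \<in> {..<q}" "b \<in> {..<q}"
      "d [^] a \<otimes> t \<otimes> inv (d [^] a) = d [^] b \<otimes> t \<otimes> inv (d [^] b)"
    then show "a = b" using le[of a b] le[of b a] by (cases "a \<le> b") auto
  qed
qed

definition centralizer :: "('a, 'b) monoid_scheme \<Rightarrow> 'a set \<Rightarrow> 'a set" where
  "centralizer G S = {x \<in> carrier G. \<forall>s \<in> S. x \<otimes>\<^bsub>G\<^esub> s = s \<otimes>\<^bsub>G\<^esub> x}"

lemma (in group) subgroup_centralizer:
  assumes "S \<subseteq> carrier G" shows "subgroup (centralizer G S) G"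
proof (rule subgroupI)
  show "centralizer G S \<subseteq> carrier G" by (auto simp: centralizer_def)
  show "centralizer G S \<noteq> {}" using assms by (auto simp: centralizer_def intro!: exI[of _ \<one>])
  show "inv x \<in> centralizer G S" if "x \<in> centralizer G S" for x
    using that assms commute_inv by (auto simp: centralizer_def)
  show "x \<otimes> y \<in> centralizer G S" if "x \<in> centralizer G S" "y \<in> centralizer G S" for x y
    using that assms commute_mult by (auto simp: centralizer_def)
qed

lemma (in group) normal_centralizer:
  assumes S: "S \<subseteq> carrier G" and conj: "\<And>g s. g \<in> carrier G \<Longrightarrow> s \<in> S \<Longrightarrow> g \<otimes> s \<otimes> inv g \<in> S"
  shows "centralizer G S \<lhd> G"
proof -
  have "g \<otimes> x \<otimes> inv g \<in> centralizer G S" if g: "g \<in> carrier G" and x: "x \<in> centralizer G S" for g x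
  proof -
    have xc: "x \<in> carrier G" using x by (simp add: centralizer_def)
    have "(g \<otimes> x \<otimes> inv g) \<otimes> s = s \<otimes> (g \<otimes> x \<otimes> inv g)" if s: "s \<in> S" for s
    proof -
      have "inv g \<otimes> s \<otimes> inv (inv g) \<in> S" using conj[of "inv g" s] g s by simp
      then have "x \<otimes> (inv g \<otimes> s \<otimes> g) = (inv g \<otimes> s \<otimes> g) \<otimes> x" using x g by (simp add: centralizer_def)
      moreover have "g \<otimes> (inv g \<otimes> s \<otimes> g) \<otimes> inv g = s" using g s S by (auto simp: m_assoc)
      ultimately show ?thesis
        using conj_commute_iff[of g x "inv g \<otimes> s \<otimes> g"] g xc s S by auto
    qed
    then show ?thesis using g xc by (simp add: centralizer_def)
  qed
  then show ?thesis using normal_inv_iff subgroup_centralizer[OF S] by blast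
qed

lemma (in group) normalizer_of_normal:
  assumes "N \<lhd> G" shows "normalizer G N = carrier G"
proof -
  have N: "N \<subseteq> carrier G" using assms normal_imp_subgroup subgroup.subset by blast
  have conj: "g \<otimes> n \<otimes> inv g \<in> N" if "g \<in> carrier G" "n \<in> N" for g n
    using assms that by (simp add: normal_inv_iff)
  have "g <# N #> inv g = N" if g: "g \<in> carrier G" for g
  proof
    show "g <# N #> inv g \<subseteq> N" using conj g unfolding l_coset_def r_coset_def by auto
    show "N \<subseteq> g <# N #> inv g"
    proof
      fix n assume n: "n \<in> N"
      have "n = g \<otimes> (inv g \<otimes> n \<otimes> inv (inv g)) \<otimes> inv g" using g n N by (auto simp: m_assoc)
      moreover have "inv g \<otimes> n \<otimes> inv (inv g) \<in> N" using conj[of "inv g" n] g n by simp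
      ultimately show "n \<in> g <# N #> inv g" unfolding l_coset_def r_coset_def by blast
    qed
  qed
  then show ?thesis using N unfolding normalizer_def stabilizer_def by auto
qed

lemma (in group) subgroup_prime_index_cases:
  assumes fin: "finite (carrier G)" and q: "Factorial_Ring.prime (q::nat)"
    and K: "subgroup K G" and C: "subgroup C G" and KC: "K \<subseteq> C"
    and card: "card (carrier G) = q * card K"
  shows "C = K \<or> C = carrier G"
proof -
  have "group (G\<lparr>carrier := C\<rparr>)" using subgroup.subgroup_is_group[OF C] is_group .
  then obtain a where a: "a * card K = card C"
    using group.lagrange[OF _ subgroup_incl[OF K C KC]] by (auto simp: order_def)
  obtain b where b: "b * card C = card (carrier G)"
    using lagrange[OF C] by (auto simp: order_def)
  have "0 < card K"
    using subgroup.one_closed[OF K] finite_subset[OF subgroup.subset[OF K] fin]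
    by (auto simp: card_gt_0_iff)
  moreover have "(b * a) * card K = q * card K" using a b card by (simp add: mult.assoc)
  ultimately have "b * a = q" by simp
  then have "a dvd q" by (metis dvd_triv_right)
  then have "a = 1 \<or> a = q" using q prime_nat_iff by blast
  moreover have "finite C" using finite_subset[OF subgroup.subset[OF C] fin] .
  ultimately show ?thesis
  proof (elim disjE)
    assume "a = 1"
    then show ?thesis using a card_subset_eq[OF \<open>finite C\<close> KC] by simp
  next
    assume "a = q"
    then have "card C = card (carrier G)" using a card by simp
    then show ?thesis using card_subset_eq[OF fin subgroup.subset[OF C]] by simp
  qed
qed

lemma (in group) exists_elem_prime_order:
  assumes "finite (carrier G)" "Factorial_Ring.prime (q::nat)" "order G = q * k"
  shows "\<exists>x \<in> carrier G. x [^] q = \<one> \<and> x \<noteq> \<one>"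
proof -
  obtain P where P: "subgroup P G" "card P = q"
    using sylow_thm[OF assms(2) is_group _ assms(1), of 1 k] assms(3) by auto
  have "P \<noteq> {\<one>}" using P(2) prime_gt_1_nat[OF assms(2)] by auto
  then obtain x where x: "x \<in> P" "x \<noteq> \<one>" using subgroup.one_closed[OF P(1)] by blast
  interpret P: group "G\<lparr>carrier := P\<rparr>" using subgroup.subgroup_is_group[OF P(1)] is_group .
  have "x [^]\<^bsub>G\<lparr>carrier := P\<rparr>\<^esub> q = \<one>"
    using P.pow_order_eq_1[of x] x(1) P(2) by (simp add: order_def)
  then show ?thesis using x subgroup.mem_carrier[OF P(1)] nat_pow_consistent[of x q P] by auto
qed

section \<open>The envelope of a loop as a permutation group\<close>

locale loop_envelope =
  fixes L :: "'a set" and m :: "'a \<Rightarrow> 'a \<Rightarrow> 'a" and e :: 'a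
  assumes loop: "is_loop L m e" and finite_L: "finite L"
begin

abbreviation "G \<equiv> env_G L m"
abbreviation "H \<equiv> env_H L m e"
abbreviation "T \<equiv> env_T L m"
abbreviation "R \<equiv> right_mult L m"
abbreviation gmult (infixl "\<star>" 70) where "x \<star> y \<equiv> x \<otimes>\<^bsub>G\<^esub> y"
abbreviation "ginv x \<equiv> inv\<^bsub>G\<^esub> x"
abbreviation "one_G \<equiv> \<one>\<^bsub>G\<^esub>"
abbreviation "gpow x (n::nat) \<equiv> x [^]\<^bsub>G\<^esub> n"

lemma e_in_L: "e \<in> L" using loop by (simp add: is_loop_def)
lemma m_closed: "x \<in> L \<Longrightarrow> y \<in> L \<Longrightarrow> m x y \<in> L" using loop by (simp add: is_loop_def)
lemma m_left_id: "x \<in> L \<Longrightarrow> m e x = x" using loop by (simp add: is_loop_def)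
lemma m_right_id: "x \<in> L \<Longrightarrow> m x e = x" using loop by (simp add: is_loop_def)
lemma right_solution_unique: "a \<in> L \<Longrightarrow> b \<in> L \<Longrightarrow> \<exists>!y. y \<in> L \<and> m y a = b"
  using loop by (simp add: is_loop_def)

lemma R_bij_betw: assumes a: "a \<in> L" shows "bij_betw (R a) L L"
proof -
  have "inj_on (\<lambda>x. m x a) L"
  proof (rule inj_onI)
    fix x y assume "x \<in> L" "y \<in> L" "m x a = m y a"
    then show "x = y" using right_solution_unique[OF a m_closed[OF \<open>y \<in> L\<close> a]] by blast
  qed
  moreover have "(\<lambda>x. m x a) ` L = L"
  proof (intro equalityI subsetI)
    fix b assume "b \<in> L"
    then obtain y where "y \<in> L" "m y a = b" using right_solution_unique[OF a] by blast
    then show "b \<in> (\<lambda>x. m x a) ` L" by blast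
  qed (use m_closed a in auto)
  ultimately have "bij_betw (\<lambda>x. m x a) L L" by (simp add: bij_betw_def)
  then show ?thesis unfolding right_mult_def by (rule bij_betw_cong[THEN iffD1, rotated]) simp
qed

lemma T_subset_Bij: "T \<subseteq> Bij L"
  using R_bij_betw by (auto simp: env_T_def Bij_def right_mult_def)

lemma subgroup_generate_T: "subgroup (generate (BijGroup L) T) (BijGroup L)"
  using group.generate_is_subgroup[OF group_BijGroup] T_subset_Bij by (simp add: BijGroup_def)

lemma carrier_G: "carrier G = generate (BijGroup L) T" by (simp add: env_G_def)

sublocale G: group G
  unfolding env_G_def using subgroup.subgroup_is_group[OF subgroup_generate_T group_BijGroup] .

lemma carrier_G_Bij: "g \<in> carrier G \<Longrightarrow> g \<in> Bij L"
  using subgroup.subset[OF subgroup_generate_T] carrier_G by (auto simp: BijGroup_def)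

lemma mult_G_eq_compose: "g \<in> carrier G \<Longrightarrow> h \<in> carrier G \<Longrightarrow> g \<star> h = compose L g h"
  using carrier_G_Bij[of g] carrier_G_Bij[of h] by (simp add: BijGroup_def env_G_def)

lemma mult_G_apply: "g \<in> carrier G \<Longrightarrow> h \<in> carrier G \<Longrightarrow> x \<in> L \<Longrightarrow> (g \<star> h) x = g (h x)"
  by (simp add: mult_G_eq_compose compose_def)

lemma one_G_apply: "x \<in> L \<Longrightarrow> one_G x = x" by (simp add: env_G_def BijGroup_def)

lemma apply_closed: "g \<in> carrier G \<Longrightarrow> x \<in> L \<Longrightarrow> g x \<in> L"
  using carrier_G_Bij Bij_imp_funcset by fastforce

lemma inj_on_L: "g \<in> carrier G \<Longrightarrow> inj_on g L"
  using carrier_G_Bij by (auto simp: Bij_def bij_betw_def)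

lemma image_L: "g \<in> carrier G \<Longrightarrow> g ` L = L"
  using carrier_G_Bij by (auto simp: Bij_def bij_betw_def)

lemma apply_inj: "g \<in> carrier G \<Longrightarrow> x \<in> L \<Longrightarrow> y \<in> L \<Longrightarrow> g x = g y \<Longrightarrow> x = y"
  using inj_on_L by (auto dest: inj_onD)

lemma G_eqI:
  assumes "g \<in> carrier G" "h \<in> carrier G" "\<And>x. x \<in> L \<Longrightarrow> g x = h x"
  shows "g = h"
proof (rule extensionalityI)
  show "g \<in> extensional L" "h \<in> extensional L"
    using Bij_imp_extensional[OF carrier_G_Bij[OF assms(1)]]
      Bij_imp_extensional[OF carrier_G_Bij[OF assms(2)]] .
qed (use assms(3) in simp)

lemma inv_apply: "g \<in> carrier G \<Longrightarrow> x \<in> L \<Longrightarrow> ginv g (g x) = x"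
  using mult_G_apply[of "ginv g" g x] by (simp add: one_G_apply)

lemma apply_inv: "g \<in> carrier G \<Longrightarrow> x \<in> L \<Longrightarrow> g (ginv g x) = x"
  using mult_G_apply[of g "ginv g" x] by (simp add: one_G_apply)

lemma conj_apply:
  "g \<in> carrier G \<Longrightarrow> x \<in> carrier G \<Longrightarrow> a \<in> L \<Longrightarrow> (g \<star> x \<star> ginv g) (g a) = g (x a)"
  using mult_G_apply inv_apply apply_closed by simp

lemma pow_apply_add:
  "x \<in> carrier G \<Longrightarrow> a \<in> L \<Longrightarrow> gpow x (i + j) a = gpow x i (gpow x j a)"
  using mult_G_apply[of "gpow x i" "gpow x j" a] by (simp add: G.nat_pow_mult)

lemma pow_apply_closed: "x \<in> carrier G \<Longrightarrow> a \<in> L \<Longrightarrow> gpow x n a \<in> L"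
  by (simp add: apply_closed)

lemma pow_apply_fixed: "x \<in> carrier G \<Longrightarrow> a \<in> L \<Longrightarrow> x a = a \<Longrightarrow> gpow x n a = a"
  by (induction n) (simp_all add: one_G_apply mult_G_apply)

lemma pow_apply_moved:
  assumes "d \<in> carrier G" "b \<in> L" "d b \<noteq> b" shows "d (gpow d n b) \<noteq> gpow d n b"
proof
  assume "d (gpow d n b) = gpow d n b"
  moreover have "d (gpow d n b) = gpow d n (d b)"
    using pow_apply_add[of d b 1 n] pow_apply_add[of d b n 1] assms by (simp add: add.commute)
  ultimately show False using apply_inj[of "gpow d n" "d b" b] assms apply_closed by simp
qed

lemma fixed_of_prime_pow_fixed:
  assumes "Factorial_Ring.prime q" "x \<in> carrier G" "gpow x q = one_G" "\<not> q dvd i"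
    and "a \<in> L" "gpow x i a = a"
  shows "x a = a"
proof -
  obtain j where "x = gpow (gpow x i) j" using G.generated_by_prime_pow[OF assms(1-4)] by blast
  then show ?thesis using pow_apply_fixed[of "gpow x i" a j] assms by simp
qed

lemma inj_on_pow_orbit:
  assumes q: "Factorial_Ring.prime q" and d: "d \<in> carrier G" "gpow d q = one_G"
    and b: "b \<in> L" "d b \<noteq> b"
  shows "inj_on (\<lambda>i. gpow d i b) {..<q}"
proof -
  have le: "i = j" if "i < q" "j < q" "i \<le> j" "gpow d i b = gpow d j b" for i j
  proof (rule ccontr)
    assume "i \<noteq> j"
    have "gpow d (j - i) (gpow d i b) = gpow d i b"
      using that pow_apply_add[of d b "j - i" i] d b by simp
    moreover have "\<not> q dvd (j - i)" using that \<open>i \<noteq> j\<close> by (auto dest: dvd_imp_le)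
    ultimately show False
      using fixed_of_prime_pow_fixed[OF q d] pow_apply_moved[OF d(1) b] pow_apply_closed d b by blast
  qed
  show ?thesis
  proof (rule inj_onI)
    fix i j assume "i \<in> {..<q}" "j \<in> {..<q}" "gpow d i b = gpow d j b"
    then show "i = j" using le[of i j] le[of j i] by (cases "i \<le> j") auto
  qed
qed

lemma R_in_G: "a \<in> L \<Longrightarrow> R a \<in> carrier G"
  unfolding carrier_G by (rule generate.incl) (simp add: env_T_def)

lemma R_apply: "a \<in> L \<Longrightarrow> x \<in> L \<Longrightarrow> R a x = m x a" by (simp add: right_mult_def)

lemma R_apply_e: "a \<in> L \<Longrightarrow> R a e = a" by (simp add: R_apply e_in_L m_left_id)

lemma R_in_T: "a \<in> L \<Longrightarrow> R a \<in> T" by (simp add: env_T_def)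

lemma T_subset_G: "T \<subseteq> carrier G" using R_in_G by (auto simp: env_T_def)

lemma T_eq_R_apply_e: "t \<in> T \<Longrightarrow> t = R (t e)" by (auto simp: env_T_def R_apply_e)

lemma T_eqI: "t \<in> T \<Longrightarrow> t' \<in> T \<Longrightarrow> t e = t' e \<Longrightarrow> t = t'"
  using T_eq_R_apply_e by metis

lemma card_T: "card T = card L"
proof -
  have "inj_on R L" by (metis R_apply_e inj_onI)
  then show ?thesis unfolding env_T_def by (simp add: card_image)
qed

lemma finite_T: "finite T" unfolding env_T_def using finite_L by simp

lemma R_e: "R e = one_G"
  by (rule G_eqI[OF R_in_G[OF e_in_L] G.one_closed]) (simp add: R_apply e_in_L m_right_id one_G_apply)

lemma one_in_T: "one_G \<in> T" using R_in_T[OF e_in_L] R_e by simp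

lemma mem_H_iff: "h \<in> H \<longleftrightarrow> h \<in> carrier G \<and> h e = e" by (simp add: env_H_def)

lemma H_subset_G: "H \<subseteq> carrier G" by (auto simp: mem_H_iff)

lemma inv_R_mult_in_H: assumes g: "g \<in> carrier G" shows "ginv (R (g e)) \<star> g \<in> H"
proof -
  have a: "g e \<in> L" using g apply_closed e_in_L by simp
  have "(ginv (R (g e)) \<star> g) e = ginv (R (g e)) (R (g e) e)"
    using g a R_in_G e_in_L mult_G_apply R_apply_e by simp
  then show ?thesis unfolding mem_H_iff using g a R_in_G inv_apply e_in_L by simp
qed

lemma finite_carrier_G: "finite (carrier G)"
proof -
  have "carrier G \<subseteq> L \<rightarrow>\<^sub>E L"
  proof
    fix g assume "g \<in> carrier G"
    then have "g \<in> Bij L" by (rule carrier_G_Bij)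
    then have "g \<in> L \<rightarrow> L" "g \<in> extensional L"
      using Bij_imp_funcset Bij_imp_extensional by auto
    then show "g \<in> L \<rightarrow>\<^sub>E L" by (simp add: PiE_def)
  qed
  moreover have "finite (L \<rightarrow>\<^sub>E L)" using finite_L by (simp add: finite_PiE)
  ultimately show ?thesis by (rule finite_subset)
qed

lemma generated_induct [consumes 1, case_names one T inv_T mult]:
  assumes g: "g \<in> carrier G" and P_one: "P one_G" and P_T: "\<And>t. t \<in> T \<Longrightarrow> P t"
    and P_inv_T: "\<And>t. t \<in> T \<Longrightarrow> P (ginv t)"
    and P_mult: "\<And>x y. x \<in> carrier G \<Longrightarrow> y \<in> carrier G \<Longrightarrow> P x \<Longrightarrow> P y \<Longrightarrow> P (x \<star> y)"
  shows "P g"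
proof -
  have "g \<in> generate (BijGroup L) T" using g carrier_G by simp
  then have "P g \<and> g \<in> carrier G"
  proof (induction rule: generate.induct)
    case one
    then show ?case using P_one by (simp add: env_G_def generate.one)
  next
    case (incl h)
    then show ?case using P_T T_subset_G by auto
  next
    case (inv h)
    have "inv\<^bsub>BijGroup L\<^esub> h = ginv h"
      unfolding env_G_def
      using group.m_inv_consistent[OF group_BijGroup subgroup_generate_T generate.incl[OF inv]] by simp
    then show ?case using P_inv_T inv T_subset_G by auto
  next
    case (eng h1 h2)
    have "h1 \<otimes>\<^bsub>BijGroup L\<^esub> h2 = h1 \<star> h2" by (simp add: env_G_def)
    then show ?case using eng P_mult by auto
  qed
  then show ?thesis by simp
qed

lemma image_mult: "g \<in> carrier G \<Longrightarrow> h \<in> carrier G \<Longrightarrow> A \<subseteq> L \<Longrightarrow> (g \<star> h) ` A = g ` h ` A"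
  using mult_G_apply by (auto simp: image_iff subset_iff)

lemma image_one: "A \<subseteq> L \<Longrightarrow> one_G ` A = A"
  using one_G_apply by (auto simp: image_iff subset_iff)

lemma image_diff: "g \<in> carrier G \<Longrightarrow> Y \<subseteq> L \<Longrightarrow> g ` (L - Y) = L - g ` Y"
  using inj_on_image_set_diff[OF inj_on_L, of g L Y] image_L by auto

lemma image_inv: "g \<in> carrier G \<Longrightarrow> A \<subseteq> L \<Longrightarrow> ginv g ` g ` A = A"
  using image_mult[of "ginv g" g A] image_one by simp

lemma card_image_G: "g \<in> carrier G \<Longrightarrow> A \<subseteq> L \<Longrightarrow> card (g ` A) = card A"
  using card_image inj_on_subset inj_on_L by metis

section \<open>Blocks of half size give a normal subgroup of index two\<close>

abbreviation HM_index_two :: bool where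
  "HM_index_two \<equiv> \<exists>M. M \<lhd> G \<and> card (carrier G) = 2 * card (H <#>\<^bsub>G\<^esub> M)"

definition set_stabilizer :: "'a set \<Rightarrow> ('a \<Rightarrow> 'a) set" where
  "set_stabilizer Y = {g \<in> carrier G. g ` Y = Y}"

lemma subgroup_set_stabilizer:
  assumes "Y \<subseteq> L" shows "subgroup (set_stabilizer Y) G"
proof (rule G.subgroupI)
  show "set_stabilizer Y \<subseteq> carrier G" by (auto simp: set_stabilizer_def)
  show "set_stabilizer Y \<noteq> {}"
    using image_one[OF assms] by (auto simp: set_stabilizer_def)
  show "ginv g \<in> set_stabilizer Y" if "g \<in> set_stabilizer Y" for g
    using that image_inv[of g Y] assms by (auto simp: set_stabilizer_def)
  show "g \<star> h \<in> set_stabilizer Y" if "g \<in> set_stabilizer Y" "h \<in> set_stabilizer Y" for g h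
    using that image_mult[of g h Y] assms by (auto simp: set_stabilizer_def)
qed

context
  fixes Y :: "'a set"
  assumes Y: "Y \<subseteq> L"
    and block: "\<And>g. g \<in> carrier G \<Longrightarrow> g ` Y = Y \<or> g ` Y = L - Y"
begin

lemma normal_set_stabilizer: "set_stabilizer Y \<lhd> G"
proof -
  have "x \<star> h \<star> ginv x \<in> set_stabilizer Y"
    if x: "x \<in> carrier G" and h: "h \<in> set_stabilizer Y" for x h
  proof -
    have hc: "h \<in> carrier G" and hY: "h ` Y = Y" using h by (auto simp: set_stabilizer_def)
    have "h ` (L - Y) = L - Y" using image_diff[OF hc Y] hY by simp
    moreover have "ginv x ` Y = Y \<or> ginv x ` Y = L - Y" using block x by simp
    ultimately have hx: "h ` ginv x ` Y = ginv x ` Y" using hY by (elim disjE) simp_all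
    have "ginv x ` Y \<subseteq> L" using apply_closed x Y by auto
    then have "(x \<star> h \<star> ginv x) ` Y = x ` h ` ginv x ` Y"
      using image_mult x hc Y by simp
    also have "\<dots> = Y" using hx image_inv[of "ginv x" Y] x Y by simp
    finally show ?thesis using x hc by (simp add: set_stabilizer_def)
  qed
  then show ?thesis using G.normal_inv_iff subgroup_set_stabilizer[OF Y] by blast
qed

lemma H_subset_set_stabilizer:
  assumes "e \<in> Y" shows "H \<subseteq> set_stabilizer Y"
proof
  fix h assume "h \<in> H"
  then have h: "h \<in> carrier G" "h e = e" by (auto simp: mem_H_iff)
  then have "e \<in> h ` Y" using assms by (metis image_eqI)
  then have "h ` Y \<noteq> L - Y" using assms by auto
  then show "h \<in> set_stabilizer Y" using block h by (auto simp: set_stabilizer_def)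
qed

lemma card_G_twice_set_stabilizer:
  assumes w: "w \<in> carrier G" "w ` Y = L - Y" and "Y \<noteq> {}"
  shows "card (carrier G) = 2 * card (set_stabilizer Y)"
proof -
  let ?M = "set_stabilizer Y"
  have M: "?M \<subseteq> carrier G" by (auto simp: set_stabilizer_def)
  have "carrier G = ?M \<union> (\<lambda>x. w \<star> x) ` ?M"
  proof (intro equalityI subsetI)
    fix g assume g: "g \<in> carrier G"
    show "g \<in> ?M \<union> (\<lambda>x. w \<star> x) ` ?M"
    proof (cases "g ` Y = Y")
      case False
      then have "(ginv w \<star> g) ` Y = ginv w ` w ` Y"
        using block[OF g] w g image_mult[of "ginv w" g Y] Y by simp
      then have "ginv w \<star> g \<in> ?M" using image_inv[OF w(1) Y] w g by (simp add: set_stabilizer_def)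
      moreover have "g = w \<star> (ginv w \<star> g)" using w g by simp
      ultimately show ?thesis by blast
    qed (use g in \<open>simp add: set_stabilizer_def\<close>)
  qed (use w M in auto)
  moreover have "?M \<inter> (\<lambda>x. w \<star> x) ` ?M = {}"
  proof -
    have "(w \<star> x) ` Y \<noteq> Y" if "x \<in> ?M" for x
      using that w image_mult[of w x Y] Y \<open>Y \<noteq> {}\<close> by (auto simp: set_stabilizer_def)
    then show ?thesis by (auto simp: set_stabilizer_def)
  qed
  moreover have "inj_on (\<lambda>x. w \<star> x) ?M" using inj_on_subset[OF G.inj_on_cmult[OF w(1)] M] .
  moreover have "finite ?M" using finite_subset[OF M finite_carrier_G] .
  ultimately show ?thesis by (simp add: card_Un_disjoint card_image)
qed

end

lemma HM_index_two_of_block: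
  assumes Y: "Y \<subseteq> L" "e \<in> Y" "card L = 2 * card Y"
    and block: "\<And>g. g \<in> carrier G \<Longrightarrow> g ` Y = Y \<or> g ` Y = L - Y"
  shows HM_index_two
proof -
  let ?M = "set_stabilizer Y"
  have "card Y \<noteq> 0" using Y(2) finite_subset[OF Y(1) finite_L] by auto
  then have "Y \<noteq> L" using Y(3) by auto
  then obtain a where a: "a \<in> L" "a \<notin> Y" using Y(1) by blast
  have "R a ` Y \<noteq> Y" using Y(2) R_apply_e[OF a(1)] a(2) by (metis image_eqI)
  then have "R a ` Y = L - Y" using block R_in_G a by blast
  then have "card (carrier G) = 2 * card ?M"
    using card_G_twice_set_stabilizer[OF Y(1) block R_in_G[OF a(1)]] Y(2) by blast
  moreover have "H <#>\<^bsub>G\<^esub> ?M = ?M"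
  proof
    have "H \<subseteq> ?M" using H_subset_set_stabilizer Y block by blast
    then show "H <#>\<^bsub>G\<^esub> ?M \<subseteq> ?M"
      using subgroup.m_closed[OF subgroup_set_stabilizer[OF Y(1)]] by (auto simp: set_mult_def)
    show "?M \<subseteq> H <#>\<^bsub>G\<^esub> ?M"
    proof
      fix x assume x: "x \<in> ?M"
      then have "x = one_G \<star> x" by (simp add: set_stabilizer_def)
      moreover have "one_G \<in> H" by (simp add: mem_H_iff one_G_apply e_in_L)
      ultimately show "x \<in> H <#>\<^bsub>G\<^esub> ?M" using x unfolding set_mult_def by blast
    qed
  qed
  ultimately show ?thesis using normal_set_stabilizer[OF Y(1) block] by auto
qed

definition point_orbit :: "('a \<Rightarrow> 'a) set \<Rightarrow> 'a \<Rightarrow> 'a set" where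
  "point_orbit N a = (\<lambda>x. x a) ` N"

lemma inj_on_apply_e_centralizer:
  assumes N: "N \<subseteq> carrier G" and trans: "point_orbit N e = L"
  shows "inj_on (\<lambda>y. y e) (centralizer G N)"
proof -
  have fix_e: "y = one_G" if y: "y \<in> centralizer G N" "y e = e" for y
  proof (rule G_eqI)
    show yc: "y \<in> carrier G" using y by (simp add: centralizer_def)
    fix a assume "a \<in> L"
    then obtain x where x: "x \<in> N" "a = x e" using trans by (auto simp: point_orbit_def)
    have "y a = (y \<star> x) e" using x yc N e_in_L by (auto simp: mult_G_apply)
    also have "\<dots> = (x \<star> y) e" using x y by (simp add: centralizer_def)
    also have "\<dots> = a" using x yc N e_in_L y(2) by (auto simp: mult_G_apply)
    finally show "y a = one_G a" using \<open>a \<in> L\<close> one_G_apply by simp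
  qed simp
  show ?thesis
  proof (rule inj_onI)
    have Z: "subgroup (centralizer G N) G" using G.subgroup_centralizer[OF N] .
    fix y y' assume yy: "y \<in> centralizer G N" "y' \<in> centralizer G N" "y e = y' e"
    have c: "y \<in> carrier G" "y' \<in> carrier G" using yy subgroup.mem_carrier[OF Z] by auto
    have "ginv y' \<star> y \<in> centralizer G N"
      using yy subgroup.m_closed[OF Z] subgroup.m_inv_closed[OF Z] by blast
    moreover have "(ginv y' \<star> y) e = e" using yy c e_in_L by (simp add: mult_G_apply inv_apply)
    ultimately have "ginv y' \<star> y = one_G" by (rule fix_e)
    then show "y = y'" using c by (metis G.inv_equality G.inv_inv G.inv_closed)
  qed
qed

context
  fixes N assumes N: "N \<lhd> G"
begin

lemma subgroup_N: "subgroup N G" using N by (rule normal_imp_subgroup)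

lemma N_subset_G: "N \<subseteq> carrier G" using subgroup.subset[OF subgroup_N] .

lemma conj_in_N: "g \<in> carrier G \<Longrightarrow> x \<in> N \<Longrightarrow> g \<star> x \<star> ginv g \<in> N"
  using N by (simp add: G.normal_inv_iff)

lemma image_point_orbit:
  assumes g: "g \<in> carrier G" and a: "a \<in> L"
  shows "g ` point_orbit N a = point_orbit N (g a)"
proof (intro equalityI subsetI)
  fix y
  assume "y \<in> g ` point_orbit N a"
  then obtain x where x: "x \<in> N" "y = g (x a)" by (auto simp: point_orbit_def)
  then have "y = (g \<star> x \<star> ginv g) (g a)" using conj_apply g N_subset_G a by auto
  then show "y \<in> point_orbit N (g a)" using conj_in_N[OF g x(1)] by (auto simp: point_orbit_def)
next
  fix y
  assume "y \<in> point_orbit N (g a)"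
  then obtain x where x: "x \<in> N" "y = x (g a)" by (auto simp: point_orbit_def)
  have x': "ginv g \<star> x \<star> ginv (ginv g) \<in> N" using conj_in_N[of "ginv g" x] g x(1) by simp
  have "x \<in> carrier G" using x(1) N_subset_G by auto
  then have "y = g ((ginv g \<star> x \<star> ginv (ginv g)) a)"
    using x(2) g a by (simp add: mult_G_apply apply_inv apply_closed)
  then show "y \<in> g ` point_orbit N a" using x' by (auto simp: point_orbit_def)
qed

lemma point_orbit_subset_L: "a \<in> L \<Longrightarrow> point_orbit N a \<subseteq> L"
  using N_subset_G apply_closed by (auto simp: point_orbit_def)

lemma in_point_orbit: "a \<in> L \<Longrightarrow> a \<in> point_orbit N a"
  using subgroup.one_closed[OF subgroup_N] one_G_apply
  unfolding point_orbit_def by (metis image_eqI)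

lemma point_orbit_trans:
  assumes "a \<in> L" "b \<in> point_orbit N a" shows "point_orbit N b \<subseteq> point_orbit N a"
proof
  fix y assume "y \<in> point_orbit N b"
  then obtain x x' where x: "x \<in> N" "x' \<in> N" "y = x (x' a)"
    using assms by (auto simp: point_orbit_def)
  then have "y = (x \<star> x') a" using N_subset_G assms(1) by (simp add: mult_G_apply subset_iff)
  then show "y \<in> point_orbit N a"
    using subgroup.m_closed[OF subgroup_N x(1,2)] by (auto simp: point_orbit_def)
qed

lemma point_orbits_disjoint:
  assumes "a \<in> L" "b \<in> L" "b \<notin> point_orbit N a"
  shows "point_orbit N a \<inter> point_orbit N b = {}"
proof (rule ccontr)
  assume "point_orbit N a \<inter> point_orbit N b \<noteq> {}"
  then obtain x x' where x: "x \<in> N" "x' \<in> N" "x a = x' b" by (auto simp: point_orbit_def)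
  have "x \<in> carrier G" "x' \<in> carrier G" using x N_subset_G by auto
  then have "b = (ginv x' \<star> x) a" using assms x(3) by (simp add: mult_G_apply inv_apply)
  moreover have "ginv x' \<star> x \<in> N"
    using x subgroup.m_closed[OF subgroup_N] subgroup.m_inv_closed[OF subgroup_N] by simp
  ultimately show False using assms(3) by (auto simp: point_orbit_def)
qed

lemma image_point_orbit_cases:
  assumes g: "g \<in> carrier G"
  shows "g ` point_orbit N e = point_orbit N e \<or> g ` point_orbit N e \<inter> point_orbit N e = {}"
proof (cases "g e \<in> point_orbit N e")
  case True
  have Y: "point_orbit N e \<subseteq> L" using point_orbit_subset_L[OF e_in_L] .
  from True have "g ` point_orbit N e \<subseteq> point_orbit N e"
    using point_orbit_trans[OF e_in_L] image_point_orbit[OF g e_in_L] by simp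
  then show ?thesis
    using card_subset_eq[OF finite_subset[OF Y finite_L]] card_image_G[OF g Y] by blast
next
  case False
  then show ?thesis
    using point_orbits_disjoint[OF e_in_L apply_closed[OF g e_in_L]] image_point_orbit[OF g e_in_L]
    by auto
qed

lemma HM_index_two_of_normal_orbit:
  assumes ne: "point_orbit N e \<noteq> L" and big: "card L \<le> 2 * card (point_orbit N e)"
  shows HM_index_two
proof -
  define Y where "Y = point_orbit N e"
  have Y: "Y \<subseteq> L" "e \<in> Y" using point_orbit_subset_L in_point_orbit e_in_L Y_def by auto
  have fin: "finite Y" using finite_subset[OF Y(1) finite_L] .
  have blk: "g ` Y = Y \<or> g ` Y \<subseteq> L - Y" if g: "g \<in> carrier G" for g
    using image_point_orbit_cases[OF g] apply_closed[OF g] Y(1) by (auto simp: Y_def)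
  obtain b where b: "b \<in> L" "b \<notin> Y" using ne Y Y_def by blast
  have "R b ` Y \<noteq> Y" using b Y(2) R_apply_e by (metis image_eqI)
  then have "card (R b ` Y) \<le> card (L - Y)"
    using blk[OF R_in_G[OF b(1)]] finite_L by (simp add: card_mono)
  then have "card Y \<le> card (L - Y)" using card_image_G[OF R_in_G[OF b(1)] Y(1)] by simp
  then have cY: "card L = 2 * card Y"
    using big[folded Y_def] card_Diff_subset[OF fin Y(1)] card_mono[OF finite_L Y(1)] by linarith
  show ?thesis
  proof (rule HM_index_two_of_block[OF Y cY])
    fix g assume g: "g \<in> carrier G"
    show "g ` Y = Y \<or> g ` Y = L - Y"
    proof (cases "g ` Y = Y")
      case False
      then have "g ` Y \<subseteq> L - Y" using blk[OF g] by blast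
      moreover have "card (g ` Y) = card (L - Y)"
        using card_image_G[OF g Y(1)] card_Diff_subset[OF fin Y(1)] cY by simp
      ultimately show ?thesis using card_subset_eq[of "L - Y"] finite_L by blast
    qed simp
  qed
qed

end

end

section \<open>Right conjugacy closed loops of order 2q\<close>

locale rcc_envelope = loop_envelope +
  assumes T_conj_closed:
    "g \<in> carrier (env_G L m) \<Longrightarrow> t \<in> env_T L m
      \<Longrightarrow> g \<otimes>\<^bsub>env_G L m\<^esub> t \<otimes>\<^bsub>env_G L m\<^esub> inv\<^bsub>env_G L m\<^esub> g \<in> env_T L m"
begin

lemma H_conj_R: assumes "h \<in> H" "a \<in> L" shows "h \<star> R a \<star> ginv h = R (h a)"
proof -
  have h: "h \<in> carrier G" "h e = e" using assms by (auto simp: mem_H_iff)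
  then have "ginv h e = e" using inv_apply[OF h(1) e_in_L] by simp
  then have "(h \<star> R a \<star> ginv h) e = h a"
    using h assms by (simp add: mult_G_apply R_in_G e_in_L R_apply_e)
  then show ?thesis
    using T_eq_R_apply_e T_conj_closed[OF h(1) R_in_T[OF assms(2)]] by metis
qed

end

locale rcc_envelope_2q = rcc_envelope +
  fixes q :: nat and K :: "('a \<Rightarrow> 'a) set"
  assumes prime_q: "Factorial_Ring.prime q" and odd_q: "odd q"
    and card_L: "card L = 2 * q"
    and subgroup_K: "subgroup K (env_G L m)"
    and H_psubset_K: "env_H L m e \<subset> K" and K_psubset_G: "K \<subset> carrier (env_G L m)"
    and card_G: "card (carrier (env_G L m)) = q * card K"
    and card_K: "card K = 2 * card (env_H L m e)"
    and normalizer_K: "normalizer (env_G L m) K = K"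
begin

lemma q_gt_2: "2 < q"
  using prime_ge_2_nat[OF prime_q] odd_q by (cases "q = 2") auto

lemma not_dvd_double: assumes "\<not> q dvd i" shows "\<not> q dvd (i + i)"
proof
  assume "q dvd i + i"
  then have "q dvd 2 * i" by (simp add: mult_2)
  then have "q dvd 2 \<or> q dvd i" using prime_dvd_mult_iff prime_q by blast
  then show False using assms q_gt_2 by (auto dest: dvd_imp_le)
qed

lemma K_subset_G: "K \<subseteq> carrier G" using K_psubset_G by blast

lemma finite_K: "finite K" using finite_subset[OF K_subset_G finite_carrier_G] .

lemma finite_H: "finite H" using finite_subset[OF H_subset_G finite_carrier_G] .

lemma K_minus_H_eq_coset:
  assumes k: "k \<in> K" "k \<notin> H" shows "K - H = (\<lambda>h. k \<star> h) ` H"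
proof -
  have kc: "k \<in> carrier G" using k K_subset_G by blast
  have kH: "(\<lambda>h. k \<star> h) ` H \<subseteq> K - H"
    using subgroup.m_closed[OF subgroup_K k(1)] H_psubset_K k kc
    by (auto simp: mem_H_iff mult_G_apply e_in_L)
  have "card ((\<lambda>h. k \<star> h) ` H) = card H"
    using inj_on_subset[OF G.inj_on_cmult[OF kc] H_subset_G] by (simp add: card_image)
  also have "\<dots> = card (K - H)"
    using card_K card_Diff_subset[OF finite_H] H_psubset_K by auto
  finally show ?thesis using card_subset_eq[OF _ kH] finite_K by blast
qed

lemma K_block_stabilizer: "\<exists>f. f \<in> L \<and> f \<noteq> e \<and> K = {g \<in> carrier G. g e = e \<or> g e = f}"
proof -
  obtain k where k: "k \<in> K" "k \<notin> H" using H_psubset_K by blast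
  have kc: "k \<in> carrier G" using k K_subset_G by blast
  have "K = {g \<in> carrier G. g e = e \<or> g e = k e}"
  proof (intro equalityI subsetI CollectI conjI)
    fix g assume g: "g \<in> K"
    then show "g \<in> carrier G" using K_subset_G by blast
    show "g e = e \<or> g e = k e"
    proof (cases "g \<in> H")
      case False
      then obtain h where "h \<in> H" "g = k \<star> h" using K_minus_H_eq_coset[OF k] g by blast
      then show ?thesis using kc by (simp add: mem_H_iff mult_G_apply e_in_L)
    qed (simp add: mem_H_iff)
  next
    fix g assume "g \<in> {g \<in> carrier G. g e = e \<or> g e = k e}"
    then have g: "g \<in> carrier G" "g e = e \<or> g e = k e" by auto
    from g(2) show "g \<in> K"
    proof
      assume "g e = k e"
      then have "ginv k \<star> g \<in> H" using g kc by (simp add: mem_H_iff mult_G_apply e_in_L inv_apply)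
      then have "k \<star> (ginv k \<star> g) \<in> K"
        using subgroup.m_closed[OF subgroup_K k(1)] H_psubset_K by blast
      then show ?thesis using kc g by simp
    qed (use g(1) H_psubset_K in \<open>auto simp: mem_H_iff\<close>)
  qed
  moreover have "k e \<in> L" "k e \<noteq> e" using kc k e_in_L apply_closed by (auto simp: mem_H_iff)
  ultimately show ?thesis by blast
qed

definition f :: 'a where
  "f = (SOME f. f \<in> L \<and> f \<noteq> e \<and> K = {g \<in> carrier G. g e = e \<or> g e = f})"

lemma f_in_L: "f \<in> L" and f_neq_e: "f \<noteq> e"
  and mem_K_iff: "g \<in> K \<longleftrightarrow> g \<in> carrier G \<and> (g e = e \<or> g e = f)"
  using someI_ex[OF K_block_stabilizer] unfolding f_def[symmetric] by blast+

lemma R_f_in_G: "R f \<in> carrier G" using R_in_G[OF f_in_L] .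

lemma R_f_in_K: "R f \<in> K" by (simp add: mem_K_iff R_f_in_G R_apply_e f_in_L)

lemma H_fixes_f: assumes "h \<in> H" shows "h f = f"
proof -
  have h: "h \<in> carrier G" "h e = e" using assms by (auto simp: mem_H_iff)
  have "h \<star> R f \<in> K" using subgroup.m_closed[OF subgroup_K] assms H_psubset_K R_f_in_K by blast
  then have "h f = e \<or> h f = f" by (simp add: mem_K_iff mult_G_apply h R_f_in_G e_in_L R_apply_e f_in_L)
  moreover have "h f \<noteq> e" using apply_inj[OF h(1) f_in_L e_in_L] h(2) f_neq_e by auto
  ultimately show ?thesis by simp
qed

lemma R_f_apply_f: "R f f = e"
proof -
  have "R f \<star> R f \<in> K" using subgroup.m_closed[OF subgroup_K R_f_in_K R_f_in_K] .
  then have "R f f = e \<or> R f f = f" by (simp add: mem_K_iff mult_G_apply R_f_in_G e_in_L R_apply_e f_in_L)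
  moreover have "R f f \<noteq> f" using apply_inj[OF R_f_in_G f_in_L e_in_L] R_apply_e[OF f_in_L] f_neq_e by auto
  ultimately show ?thesis by simp
qed

lemma H_commute_R_f: assumes "h \<in> H" shows "h \<star> R f = R f \<star> h"
proof -
  have "h \<in> carrier G" using assms H_subset_G by blast
  moreover have "h \<star> R f \<star> ginv h = R f" using H_conj_R[OF assms f_in_L] H_fixes_f[OF assms] by simp
  ultimately show ?thesis using G.conj_eq_iff_commute[of h "R f"] R_f_in_G by simp
qed

text \<open>The blocks of imprimitivity of G belonging to K are the pairs {a, m a f}, and
  twin a is the partner of a in its block.\<close>
definition twin :: "'a \<Rightarrow> 'a" where "twin a = R a f"

lemma twin_in_L: "a \<in> L \<Longrightarrow> twin a \<in> L" unfolding twin_def using R_in_G apply_closed f_in_L by simp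

lemma twin_apply: assumes g: "g \<in> carrier G" and a: "a \<in> L" shows "twin (g a) = g (twin a)"
proof -
  define b where "b = g a"
  have b: "b \<in> L" using g a apply_closed b_def by simp
  have ga: "g \<star> R a \<in> carrier G" using g R_in_G a by simp
  have "(g \<star> R a) e = b" using g a by (simp add: mult_G_apply R_in_G e_in_L R_apply_e b_def)
  then have wH: "ginv (R b) \<star> (g \<star> R a) \<in> H" using inv_R_mult_in_H[OF ga] by simp
  have w: "ginv (R b) \<star> (g \<star> R a) \<in> carrier G" using wH H_subset_G by blast
  have "g (twin a) = (g \<star> R a) f" using g a by (simp add: twin_def mult_G_apply R_in_G f_in_L)
  also have "g \<star> R a = R b \<star> (ginv (R b) \<star> (g \<star> R a))" using ga R_in_G[OF b] by simp
  also have "(R b \<star> (ginv (R b) \<star> (g \<star> R a))) f = R b ((ginv (R b) \<star> (g \<star> R a)) f)"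
    using mult_G_apply[OF R_in_G[OF b] w f_in_L] .
  also have "\<dots> = twin b" using H_fixes_f[OF wH] by (simp add: twin_def)
  finally show ?thesis using b_def by simp
qed

lemma twin_e: "twin e = f" by (simp add: twin_def R_e one_G_apply f_in_L)

lemma twin_f: "twin f = e" by (simp add: twin_def R_f_apply_f)

lemma twin_twin: assumes "a \<in> L" shows "twin (twin a) = a"
proof -
  have "twin (twin a) = R a (twin f)"
    unfolding twin_def[of a] by (rule twin_apply[OF R_in_G[OF assms] f_in_L])
  then show ?thesis using twin_f R_apply_e[OF assms] by simp
qed

lemma twin_neq: assumes "a \<in> L" shows "twin a \<noteq> a"
proof
  assume "twin a = a"
  then have "R a f = R a e" using R_apply_e[OF assms] by (simp add: twin_def)
  then show False using apply_inj[OF R_in_G[OF assms] f_in_L e_in_L] f_neq_e by blast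
qed

lemma twin_inj: assumes "a \<in> L" "b \<in> L" "twin a = twin b" shows "a = b"
  using twin_twin[OF assms(1)] twin_twin[OF assms(2)] assms(3) by metis

lemma pow_twin: "x \<in> carrier G \<Longrightarrow> a \<in> L \<Longrightarrow> gpow x n (twin a) = twin (gpow x n a)"
  using twin_apply[of "gpow x n" a] by simp

section \<open>Elements of order q\<close>

lemma pow_twin_imp_fixed:
  assumes d: "d \<in> carrier G" "gpow d q = one_G" and i: "\<not> q dvd i"
    and a: "a \<in> L" and eq: "gpow d i a = twin a"
  shows "d a = a"
proof -
  have "gpow d (i + i) a = gpow d i (twin a)" using pow_apply_add[OF d(1) a] eq by simp
  also have "\<dots> = a" using pow_twin[OF d(1) a] eq twin_twin[OF a] by simp
  finally have "gpow d (i + i) a = a" .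
  moreover have "\<not> q dvd (i + i)" using not_dvd_double[OF i] .
  ultimately show ?thesis using fixed_of_prime_pow_fixed[OF prime_q d] a by blast
qed

lemma pow_orbit_twin_disjoint:
  assumes d: "d \<in> carrier G" "gpow d q = one_G" and b: "b \<in> L" "d b \<noteq> b"
    and ij: "i < q" "j < q"
  shows "gpow d i b \<noteq> twin (gpow d j b)"
proof
  assume eq: "gpow d i b = twin (gpow d j b)"
  have no_pow_twin: "gpow d k (gpow d n b) \<noteq> twin (gpow d n b)" if "0 < k" "k < q" for k n
  proof
    assume "gpow d k (gpow d n b) = twin (gpow d n b)"
    moreover have "\<not> q dvd k" using that by (auto dest: dvd_imp_le)
    ultimately have "d (gpow d n b) = gpow d n b"
      using pow_twin_imp_fixed[OF d] pow_apply_closed[OF d(1) b(1)] by blast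
    then show False using pow_apply_moved[OF d(1) b] by blast
  qed
  consider "j < i" | "i < j" | "i = j" by linarith
  then show False
  proof cases
    case 1
    have "gpow d (i - j) (gpow d j b) = twin (gpow d j b)"
      using eq pow_apply_add[OF d(1) b(1), of "i - j" j] 1 by simp
    then show False using no_pow_twin[of "i - j" j] 1 ij by simp
  next
    case 2
    have "gpow d (j - i) (gpow d i b) = gpow d j b"
      using pow_apply_add[OF d(1) b(1), of "j - i" i] 2 by simp
    also have "\<dots> = twin (gpow d i b)"
      using eq twin_twin[OF pow_apply_closed[OF d(1) b(1)], of j] by simp
    finally show False using no_pow_twin[of "j - i" i] 2 ij by simp
  next
    case 3
    then show False using eq twin_neq[OF pow_apply_closed[OF d(1) b(1)], of j] by simp
  qed
qed

lemma pow_orbit_union_twin: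
  assumes d: "d \<in> carrier G" "gpow d q = one_G" and b: "b \<in> L" "d b \<noteq> b"
  defines "P \<equiv> (\<lambda>i. gpow d i b) ` {..<q}"
  shows "P \<union> twin ` P = L" and "P \<inter> twin ` P = {}"
proof -
  have PL: "P \<subseteq> L" using pow_apply_closed[OF d(1) b(1)] by (auto simp: P_def)
  have cP: "card P = q" using card_image[OF inj_on_pow_orbit[OF prime_q d b]] by (simp add: P_def)
  have "inj_on twin P" using twin_inj PL by (meson inj_onI subsetD)
  then have "card (twin ` P) = card P" by (rule card_image)
  show disj: "P \<inter> twin ` P = {}"
    using pow_orbit_twin_disjoint[OF d b] by (auto simp: P_def)
  have "card (P \<union> twin ` P) = card L"
    using card_Un_disjoint[OF _ _ disj] cP \<open>card (twin ` P) = card P\<close> card_L by (simp add: P_def)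
  moreover have "P \<union> twin ` P \<subseteq> L" using PL twin_in_L by auto
  ultimately show "P \<union> twin ` P = L" using card_subset_eq[OF finite_L] by blast
qed

lemma order_q_fixed_point_free:
  assumes d: "d \<in> carrier G" "gpow d q = one_G" "d \<noteq> one_G" and a: "a \<in> L"
  shows "d a \<noteq> a"
proof -
  obtain b where b: "b \<in> L" "d b \<noteq> b"
    using G_eqI[OF d(1) G.one_closed] one_G_apply d(3) by auto
  then obtain n where "a = gpow d n b \<or> a = twin (gpow d n b)"
    using pow_orbit_union_twin(1)[OF d(1,2) b] a by blast
  then show ?thesis
  proof
    assume "a = twin (gpow d n b)"
    then have "d a = twin (d (gpow d n b))"
      using twin_apply[OF d(1) pow_apply_closed[OF d(1) b(1)]] by simp
    then show ?thesis
      using \<open>a = twin (gpow d n b)\<close> twin_inj pow_apply_moved[OF d(1) b, of n]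
        apply_closed[OF d(1)] pow_apply_closed[OF d(1) b(1)] by metis
  qed (use pow_apply_moved[OF d(1) b] in blast)
qed

lemma order_q_pow_moves:
  assumes d: "d \<in> carrier G" "gpow d q = one_G" "d \<noteq> one_G" and i: "\<not> q dvd i" and a: "a \<in> L"
  shows "gpow d i a \<noteq> a" and "gpow d i a \<noteq> twin a"
proof -
  have "d a \<noteq> a" using order_q_fixed_point_free[OF d a] .
  then show "gpow d i a \<noteq> a" "gpow d i a \<noteq> twin a"
    using fixed_of_prime_pow_fixed[OF prime_q d(1,2) i a] pow_twin_imp_fixed[OF d(1,2) i a] by blast+
qed

definition c :: "'a \<Rightarrow> 'a" where
  "c = (SOME c. c \<in> carrier G \<and> gpow c q = one_G \<and> c \<noteq> one_G)"

lemma c_in_G: "c \<in> carrier G" and c_pow_q: "gpow c q = one_G" and c_neq_one: "c \<noteq> one_G"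
proof -
  have "\<exists>x \<in> carrier G. gpow x q = one_G \<and> x \<noteq> one_G"
    using G.exists_elem_prime_order[OF finite_carrier_G prime_q, of "card K"] card_G
    by (simp add: order_def)
  then have "\<exists>x. x \<in> carrier G \<and> gpow x q = one_G \<and> x \<noteq> one_G" by blast
  then have "c \<in> carrier G \<and> gpow c q = one_G \<and> c \<noteq> one_G"
    unfolding c_def by (rule someI_ex)
  then show "c \<in> carrier G" "gpow c q = one_G" "c \<noteq> one_G" by auto
qed

lemmas c_order_q = c_in_G c_pow_q c_neq_one

definition c_orbit :: "'a set" where "c_orbit = (\<lambda>i. gpow c i e) ` {..<q}"

lemma c_moves_e: "c e \<noteq> e" using order_q_fixed_point_free[OF c_order_q e_in_L] .

lemma inj_on_c_orbit: "inj_on (\<lambda>i. gpow c i e) {..<q}"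
  using inj_on_pow_orbit[OF prime_q c_in_G c_pow_q e_in_L c_moves_e] .

lemma c_orbit_union_twin: "c_orbit \<union> twin ` c_orbit = L"
  using pow_orbit_union_twin(1)[OF c_in_G c_pow_q e_in_L c_moves_e] unfolding c_orbit_def .

lemma card_c_orbit: "card c_orbit = q"
  using card_image[OF inj_on_c_orbit] by (simp add: c_orbit_def)

lemma pow_c_mod: "gpow c n = gpow c (n mod q)"
  using G.pow_mod_period[OF c_in_G c_pow_q] .

lemma pow_c_e_in_c_orbit: "gpow c n e \<in> c_orbit"
  unfolding c_orbit_def using pow_c_mod[of n] q_gt_2 by (auto intro: image_eqI[where x = "n mod q"])

lemma L_cases_c_orbit:
  assumes "a \<in> L" obtains i where "i < q" "a = gpow c i e \<or> a = twin (gpow c i e)"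
  using assms c_orbit_union_twin unfolding c_orbit_def by blast

lemma HM_index_two_of_cyclic_normal:
  assumes conj: "\<And>g. g \<in> carrier G \<Longrightarrow> \<exists>i. g \<star> c \<star> ginv g = gpow c i"
  shows HM_index_two
proof -
  define N where "N = range (gpow c)"
  have sg: "subgroup N G"
  proof (rule G.subgroupI)
    show "N \<subseteq> carrier G" "N \<noteq> {}" using c_in_G by (auto simp: N_def)
    show "ginv x \<in> N" if x: "x \<in> N" for x
    proof -
      obtain i where x: "x = gpow c i" using x unfolding N_def by blast
      have "gpow c ((q - 1) * i) \<star> gpow c i = gpow c (q * i)"
        using c_in_G q_gt_2 by (simp add: G.nat_pow_mult algebra_simps)
      also have "\<dots> = one_G" using c_in_G c_pow_q by (simp add: G.nat_pow_pow [symmetric])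
      finally have "ginv x = gpow c ((q - 1) * i)" using x c_in_G by (simp add: G.inv_equality)
      then show ?thesis by (simp add: N_def)
    qed
    show "x \<star> y \<in> N" if "x \<in> N" "y \<in> N" for x y
      using that c_in_G by (auto simp: N_def G.nat_pow_mult)
  qed
  have "N \<lhd> G"
  proof -
    have "g \<star> gpow c i \<star> ginv g \<in> N" if g: "g \<in> carrier G" for g i
    proof -
      obtain k where "g \<star> c \<star> ginv g = gpow c k" using conj[OF g] by blast
      then have "g \<star> gpow c i \<star> ginv g = gpow c (k * i)"
        using G.pow_conj[OF g c_in_G, of i] c_in_G by (simp add: G.nat_pow_pow)
      then show ?thesis by (simp add: N_def)
    qed
    then show ?thesis using sg G.normal_inv_iff by (auto simp: N_def)
  qed
  moreover have orbit: "point_orbit N e = c_orbit"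
    using pow_c_e_in_c_orbit by (auto simp: point_orbit_def c_orbit_def N_def)
  moreover have "c_orbit \<noteq> L" using card_c_orbit card_L q_gt_2 by auto
  ultimately show ?thesis
    using HM_index_two_of_normal_orbit card_c_orbit card_L by simp
qed

section \<open>Elements of T commuting with an element of order q\<close>

definition T_centralizer :: "('a \<Rightarrow> 'a) \<Rightarrow> ('a \<Rightarrow> 'a) set" where
  "T_centralizer d = {t \<in> T. t \<star> d = d \<star> t}"

definition conj_orbit :: "('a \<Rightarrow> 'a) \<Rightarrow> ('a \<Rightarrow> 'a) \<Rightarrow> ('a \<Rightarrow> 'a) set" where
  "conj_orbit d t = (\<lambda>i. gpow d i \<star> t \<star> ginv (gpow d i)) ` {..<q}"

lemma T_centralizer_subset: "T_centralizer d \<subseteq> T" by (auto simp: T_centralizer_def)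

lemma one_in_T_centralizer: "d \<in> carrier G \<Longrightarrow> one_G \<in> T_centralizer d"
  using one_in_T by (simp add: T_centralizer_def)

lemma finite_T_centralizer: "finite (T_centralizer d)"
  using finite_subset[OF T_centralizer_subset finite_T] .

context
  fixes d assumes d: "d \<in> carrier G" "gpow d q = one_G"
begin

lemma conj_pow_commute_iff:
  assumes "x \<in> carrier G"
  shows "(gpow d i \<star> x \<star> ginv (gpow d i)) \<star> d = d \<star> (gpow d i \<star> x \<star> ginv (gpow d i))
    \<longleftrightarrow> x \<star> d = d \<star> x"
proof -
  have "gpow d i \<star> d \<star> ginv (gpow d i) = d"
    using G.conj_eq_iff_commute[of "gpow d i" d] d G.nat_pow_comm[of d i 1] by simp
  then show ?thesis using G.conj_commute_iff[of "gpow d i" x d] assms d by simp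
qed

lemma conj_orbit_subset:
  assumes t: "t \<in> T - T_centralizer d" shows "conj_orbit d t \<subseteq> T - T_centralizer d"
proof
  fix s assume "s \<in> conj_orbit d t"
  then obtain i where s: "s = gpow d i \<star> t \<star> ginv (gpow d i)" by (auto simp: conj_orbit_def)
  have "t \<in> carrier G" using t T_subset_G by blast
  then show "s \<in> T - T_centralizer d"
    using s t d T_conj_closed[of "gpow d i" t] conj_pow_commute_iff[of t i]
    by (simp add: T_centralizer_def)
qed

lemma card_conj_orbit:
  assumes t: "t \<in> T - T_centralizer d" shows "card (conj_orbit d t) = q"
proof -
  have "t \<in> carrier G" "t \<star> d \<noteq> d \<star> t" using t T_subset_G by (auto simp: T_centralizer_def)
  then show ?thesis
    using card_image[OF G.inj_on_conj_pow[OF prime_q d]] by (simp add: conj_orbit_def)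
qed

lemma in_conj_orbit: "t \<in> carrier G \<Longrightarrow> t \<in> conj_orbit d t"
  using q_gt_2 by (force simp: conj_orbit_def intro: image_eqI[where x = 0])

lemma conj_orbit_trans:
  assumes t: "t \<in> carrier G" and s: "s \<in> conj_orbit d t" shows "conj_orbit d s \<subseteq> conj_orbit d t"
proof
  fix y assume "y \<in> conj_orbit d s"
  then obtain k where y: "y = gpow d k \<star> s \<star> ginv (gpow d k)" by (auto simp: conj_orbit_def)
  obtain i where si: "s = gpow d i \<star> t \<star> ginv (gpow d i)" using s by (auto simp: conj_orbit_def)
  have "y = gpow d (k + i) \<star> t \<star> ginv (gpow d (k + i))"
    using y si G.conj_conj[of "gpow d k" "gpow d i" t] d t by (simp add: G.nat_pow_mult)
  also have "gpow d (k + i) = gpow d ((k + i) mod q)" using G.pow_mod_period d by blast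
  finally show "y \<in> conj_orbit d t"
    using q_gt_2 unfolding conj_orbit_def by (auto intro: image_eqI[where x = "(k + i) mod q"])
qed

lemma conj_orbit_eq:
  assumes t: "t \<in> T - T_centralizer d" and s: "s \<in> conj_orbit d t"
  shows "conj_orbit d s = conj_orbit d t"
proof -
  have s': "s \<in> T - T_centralizer d" using conj_orbit_subset[OF t] s by blast
  have "conj_orbit d s \<subseteq> conj_orbit d t" using conj_orbit_trans t s T_subset_G by blast
  then show ?thesis
    using card_subset_eq[of "conj_orbit d t"] card_conj_orbit[OF t] card_conj_orbit[OF s']
    by (simp add: conj_orbit_def)
qed

text \<open>Two disjoint orbits of size q would not fit into T minus the identity.\<close>
lemma T_minus_centralizer_eq_orbit:
  assumes t: "t \<in> T - T_centralizer d" shows "T - T_centralizer d = conj_orbit d t"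
proof
  show "conj_orbit d t \<subseteq> T - T_centralizer d" using conj_orbit_subset[OF t] .
  show "T - T_centralizer d \<subseteq> conj_orbit d t"
  proof
    fix t' assume t': "t' \<in> T - T_centralizer d"
    show "t' \<in> conj_orbit d t"
    proof (rule ccontr)
      assume nt: "t' \<notin> conj_orbit d t"
      have disj: "conj_orbit d t \<inter> conj_orbit d t' = {}"
      proof (rule ccontr)
        assume "conj_orbit d t \<inter> conj_orbit d t' \<noteq> {}"
        then obtain s where s: "s \<in> conj_orbit d t" "s \<in> conj_orbit d t'" by blast
        have "conj_orbit d t' = conj_orbit d t"
          using conj_orbit_eq[OF t s(1)] conj_orbit_eq[OF t' s(2)] by simp
        moreover have "t' \<in> conj_orbit d t'" using in_conj_orbit t' T_subset_G by blast
        ultimately show False using nt by simp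
      qed
      have sub: "conj_orbit d t \<union> conj_orbit d t' \<subseteq> T - {one_G}"
        using conj_orbit_subset[OF t] conj_orbit_subset[OF t'] one_in_T_centralizer[OF d(1)] by blast
      have "card (conj_orbit d t \<union> conj_orbit d t') = q + q"
        using card_Un_disjoint[OF _ _ disj] card_conj_orbit[OF t] card_conj_orbit[OF t']
        by (simp add: conj_orbit_def)
      moreover have "card (conj_orbit d t \<union> conj_orbit d t') \<le> card (T - {one_G})"
        using card_mono[OF _ sub] finite_T by simp
      moreover have "card (T - {one_G}) = 2 * q - 1" using card_T card_L one_in_T finite_T by simp
      ultimately show False using q_gt_2 by linarith
    qed
  qed
qed

lemma card_T_minus_centralizer:
  assumes "T - T_centralizer d \<noteq> {}" shows "card (T - T_centralizer d) = q"
proof -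
  obtain t where t: "t \<in> T - T_centralizer d" using assms by blast
  show ?thesis using T_minus_centralizer_eq_orbit[OF t] card_conj_orbit[OF t] by simp
qed

lemma card_T_centralizer_eq:
  assumes "T - T_centralizer d \<noteq> {}" shows "card (T_centralizer d) = q"
proof -
  have "card (T - T_centralizer d) = card T - card (T_centralizer d)"
    using card_Diff_subset[OF finite_T_centralizer T_centralizer_subset] .
  moreover have "card (T_centralizer d) \<le> card T" using card_mono[OF finite_T T_centralizer_subset] .
  ultimately show ?thesis using card_T_minus_centralizer[OF assms] card_T card_L by linarith
qed

lemma card_T_centralizer: "q \<le> card (T_centralizer d)"
proof (cases "T - T_centralizer d = {}")
  case True
  then have "T_centralizer d = T" using T_centralizer_subset by blast
  then show ?thesis using card_T card_L by simp
qed (simp add: card_T_centralizer_eq)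

end

definition conj_class_c :: "('a \<Rightarrow> 'a) set" where
  "conj_class_c = {g \<star> c \<star> ginv g | g. g \<in> carrier G}"

lemma c_in_conj_class: "c \<in> conj_class_c"
proof -
  have "c = one_G \<star> c \<star> ginv one_G" using c_in_G by simp
  then show ?thesis unfolding conj_class_c_def by blast
qed

lemma conj_class_c_order_q:
  assumes "a \<in> conj_class_c" shows "a \<in> carrier G" "gpow a q = one_G" "a \<noteq> one_G"
proof -
  obtain g where g: "g \<in> carrier G" "a = g \<star> c \<star> ginv g" using assms by (auto simp: conj_class_c_def)
  then show "a \<in> carrier G" using c_in_G by simp
  show "gpow a q = one_G" using g G.pow_conj[OF g(1) c_in_G, of q] c_pow_q c_in_G by simp
  show "a \<noteq> one_G"
  proof
    assume "a = one_G"
    have "c = ginv g \<star> (g \<star> c \<star> ginv g) \<star> g" using g c_in_G by (simp add: G.m_assoc)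
    also have "\<dots> = one_G" using \<open>a = one_G\<close> g by simp
    finally show False using c_neq_one by simp
  qed
qed

lemma conj_class_c_subset: "conj_class_c \<subseteq> carrier G"
  using conj_class_c_order_q(1) by blast

lemma conj_class_c_closed:
  assumes g: "g \<in> carrier G" and s: "s \<in> conj_class_c" shows "g \<star> s \<star> ginv g \<in> conj_class_c"
proof -
  obtain h where h: "h \<in> carrier G" "s = h \<star> c \<star> ginv h" using s by (auto simp: conj_class_c_def)
  then have "g \<star> s \<star> ginv g = (g \<star> h) \<star> c \<star> ginv (g \<star> h)"
    using G.conj_conj[OF g h(1) c_in_G] by simp
  then show ?thesis using g h(1) by (auto simp: conj_class_c_def)
qed

lemma normal_centralizer_conj_class: "centralizer G conj_class_c \<lhd> G"
  using G.normal_centralizer[OF conj_class_c_subset conj_class_c_closed] .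

text \<open>If the centralizer N of the conjugacy class of c is transitive on L, its own centralizer
  acts semiregularly; two conjugates of c generating different cyclic groups would then give
  q * q distinct points of L.\<close>
lemma conj_c_in_cyclic_of_transitive:
  assumes trans: "point_orbit (centralizer G conj_class_c) e = L" and g: "g \<in> carrier G"
  shows "\<exists>i. g \<star> c \<star> ginv g = gpow c i"
proof (rule ccontr)
  define N where "N = centralizer G conj_class_c"
  define Z where "Z = centralizer G N"
  have N_sub: "N \<subseteq> carrier G" by (auto simp: N_def centralizer_def)
  have Z: "subgroup Z G" using G.subgroup_centralizer[OF N_sub] by (simp add: Z_def)
  have inj_Z: "inj_on (\<lambda>y. y e) Z"
    using inj_on_apply_e_centralizer[OF N_sub] trans by (simp add: Z_def N_def)
  have class_Z: "conj_class_c \<subseteq> Z"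
    using conj_class_c_subset by (auto simp: Z_def N_def centralizer_def)
  define c' where "c' = g \<star> c \<star> ginv g"
  have c': "c' \<in> conj_class_c" using g by (auto simp: c'_def conj_class_c_def)
  assume "\<nexists>i. g \<star> c \<star> ginv g = gpow c i"
  then have "\<forall>k. c' \<noteq> gpow c k" by (simp add: c'_def)
  then have inj: "inj_on (\<lambda>(i, j). gpow c i \<star> gpow c' j) ({..<q} \<times> {..<q})"
    using G.inj_on_pow_products[OF prime_q c_order_q conj_class_c_order_q(1,2)[OF c']] by blast
  have prod_Z: "gpow c i \<star> gpow c' j \<in> Z" for i j
    using class_Z c_in_conj_class c' subgroup.m_closed[OF Z] G.subgroup_nat_pow_closed[OF Z] by blast
  have "(\<lambda>(i, j). gpow c i \<star> gpow c' j) ` ({..<q} \<times> {..<q}) \<subseteq> Z" using prod_Z by auto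
  then have "inj_on ((\<lambda>y. y e) \<circ> (\<lambda>(i, j). gpow c i \<star> gpow c' j)) ({..<q} \<times> {..<q})"
    using comp_inj_on[OF inj inj_on_subset[OF inj_Z]] by blast
  moreover have "(\<lambda>y. y e) \<circ> (\<lambda>(i, j). gpow c i \<star> gpow c' j) = (\<lambda>(i, j). (gpow c i \<star> gpow c' j) e)"
    by (auto simp: fun_eq_iff)
  ultimately have "inj_on (\<lambda>(i, j). (gpow c i \<star> gpow c' j) e) ({..<q} \<times> {..<q})" by simp
  moreover have "(\<lambda>(i, j). (gpow c i \<star> gpow c' j) e) ` ({..<q} \<times> {..<q}) \<subseteq> L"
    using c_in_G conj_class_c_order_q(1)[OF c'] e_in_L apply_closed by auto
  ultimately have "q * q \<le> card L" using card_image card_mono[OF finite_L] by (metis card_cartesian_product card_lessThan)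
  then show False using card_L q_gt_2 by simp
qed

section \<open>The case of R f not central\<close>

lemma K_subset_centralizer_R_f: "K \<subseteq> centralizer G {R f}"
proof
  fix k assume k: "k \<in> K"
  then have kc: "k \<in> carrier G" and ke: "k e = e \<or> k e = f" by (auto simp: mem_K_iff)
  have "k \<star> R f = R f \<star> k"
  proof (cases "k e = e")
    case True
    then show ?thesis using H_commute_R_f kc by (simp add: mem_H_iff)
  next
    case False
    then have w: "ginv (R f) \<star> k \<in> H" using inv_R_mult_in_H[OF kc] ke by simp
    then have wc: "ginv (R f) \<star> k \<in> carrier G" using H_subset_G by blast
    have "k = R f \<star> (ginv (R f) \<star> k)" using kc R_f_in_G by simp
    then have "k \<star> R f = R f \<star> ((ginv (R f) \<star> k) \<star> R f)" using wc R_f_in_G by (metis G.m_assoc)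
    also have "\<dots> = R f \<star> (R f \<star> (ginv (R f) \<star> k))" using H_commute_R_f[OF w] by simp
    finally show ?thesis using kc R_f_in_G by simp
  qed
  then show "k \<in> centralizer G {R f}" using kc by (simp add: centralizer_def)
qed

lemma centralizer_R_f_cases: "centralizer G {R f} = K \<or> centralizer G {R f} = carrier G"
  using G.subgroup_prime_index_cases[OF finite_carrier_G prime_q subgroup_K
      G.subgroup_centralizer K_subset_centralizer_R_f card_G] R_f_in_G by simp

context
  assumes R_f_not_central: "centralizer G {R f} \<noteq> carrier G"
begin

lemma centralizer_R_f_eq_K: "centralizer G {R f} = K"
  using centralizer_R_f_cases R_f_not_central by blast

text \<open>A conjugate of R f commuting with c would make a conjugate of c lie in K, i.e.
  fix the block of e, which an element of order q cannot do.\<close>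
lemma conj_R_f_notin_T_centralizer:
  assumes g: "g \<in> carrier G" shows "g \<star> R f \<star> ginv g \<notin> T_centralizer c"
proof
  define c' where "c' = ginv g \<star> c \<star> g"
  have c': "c' \<in> conj_class_c"
    using conj_class_c_closed[OF _ c_in_conj_class, of "ginv g"] g by (simp add: c'_def)
  have c'c: "c' \<in> carrier G" using conj_class_c_order_q(1)[OF c'] .
  have "g \<star> c' \<star> ginv g = c" using g c_in_G by (simp add: c'_def G.m_assoc)
  moreover assume "g \<star> R f \<star> ginv g \<in> T_centralizer c"
  ultimately have "R f \<star> c' = c' \<star> R f"
    using G.conj_commute_iff[OF g R_f_in_G c'c] by (simp add: T_centralizer_def)
  then have "c' \<in> centralizer G {R f}" using c'c by (simp add: centralizer_def)
  then have "c' \<in> K" using centralizer_R_f_eq_K by simp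
  moreover have "\<not> q dvd 1" using q_gt_2 by simp
  then have "gpow c' 1 e \<noteq> e" "gpow c' 1 e \<noteq> twin e"
    using order_q_pow_moves[OF conj_class_c_order_q[OF c'] _ e_in_L] by blast+
  ultimately show False using c'c twin_e by (simp add: mem_K_iff)
qed

lemma T_minus_centralizer_c: "T - T_centralizer c = conj_orbit c (R f)"
proof (rule T_minus_centralizer_eq_orbit[OF c_in_G c_pow_q])
  show "R f \<in> T - T_centralizer c"
    using conj_R_f_notin_T_centralizer[of one_G] R_in_T[OF f_in_L] R_f_in_G by simp
qed

lemma T_centralizer_c_conj_closed:
  assumes g: "g \<in> carrier G" and t: "t \<in> T_centralizer c"
  shows "g \<star> t \<star> ginv g \<in> T_centralizer c"
proof (rule ccontr)
  assume "g \<star> t \<star> ginv g \<notin> T_centralizer c"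
  moreover have tc: "t \<in> carrier G" using t T_centralizer_subset T_subset_G by blast
  moreover have "g \<star> t \<star> ginv g \<in> T" using T_conj_closed g t T_centralizer_subset by blast
  ultimately obtain i where i: "g \<star> t \<star> ginv g = gpow c i \<star> R f \<star> ginv (gpow c i)"
    using T_minus_centralizer_c by (auto simp: conj_orbit_def)
  have "t = ginv g \<star> (g \<star> t \<star> ginv g) \<star> ginv (ginv g)" using g tc by (simp add: G.m_assoc)
  also have "\<dots> = (ginv g \<star> gpow c i) \<star> R f \<star> ginv (ginv g \<star> gpow c i)"
    using i G.conj_conj[of "ginv g" "gpow c i" "R f"] g c_in_G R_f_in_G by simp
  finally show False
    using conj_R_f_notin_T_centralizer[of "ginv g \<star> gpow c i"] g c_in_G t by simp
qed

lemma T_centralizer_c_subset: "T_centralizer c \<subseteq> centralizer G conj_class_c"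
proof
  fix t assume t: "t \<in> T_centralizer c"
  have tc: "t \<in> carrier G" using t T_centralizer_subset T_subset_G by blast
  have "t \<star> s = s \<star> t" if s: "s \<in> conj_class_c" for s
  proof -
    obtain g where g: "g \<in> carrier G" "s = g \<star> c \<star> ginv g" using s by (auto simp: conj_class_c_def)
    have "ginv g \<star> t \<star> ginv (ginv g) \<in> T_centralizer c"
      using T_centralizer_c_conj_closed[of "ginv g" t] g t by simp
    then have "(ginv g \<star> t \<star> g) \<star> c = c \<star> (ginv g \<star> t \<star> g)"
      using g by (simp add: T_centralizer_def)
    moreover have "g \<star> (ginv g \<star> t \<star> g) \<star> ginv g = t" using g tc by (simp add: G.m_assoc)
    ultimately show ?thesis
      using G.conj_commute_iff[of g "ginv g \<star> t \<star> g" c] g tc c_in_G g(2) by simp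
  qed
  then show "t \<in> centralizer G conj_class_c" using tc by (simp add: centralizer_def)
qed

lemma HM_index_two_R_f_not_central: HM_index_two
proof -
  define N where "N = centralizer G conj_class_c"
  have N: "N \<lhd> G" using normal_centralizer_conj_class by (simp add: N_def)
  have "(\<lambda>t. t e) ` T_centralizer c \<subseteq> point_orbit N e"
    using T_centralizer_c_subset by (auto simp: point_orbit_def N_def)
  moreover have "inj_on (\<lambda>t. t e) (T_centralizer c)"
    using T_eqI T_centralizer_subset by (meson inj_onI subsetD)
  moreover have "finite (point_orbit N e)"
    using finite_subset[OF point_orbit_subset_L[OF N e_in_L] finite_L] .
  ultimately have "card (T_centralizer c) \<le> card (point_orbit N e)"
    by (metis card_image card_mono)
  then have big: "card L \<le> 2 * card (point_orbit N e)"
    using card_T_centralizer[OF c_in_G c_pow_q] card_L by simp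
  show ?thesis
  proof (cases "point_orbit N e = L")
    case True
    then show ?thesis
      using HM_index_two_of_cyclic_normal conj_c_in_cyclic_of_transitive unfolding N_def by blast
  qed (use HM_index_two_of_normal_orbit[OF N] big in blast)
qed

end

section \<open>The case of R f central\<close>

definition in_pair :: "nat \<Rightarrow> 'a \<Rightarrow> bool" where
  "in_pair k a \<longleftrightarrow> a = gpow c k e \<or> a = twin (gpow c k e)"

lemma in_pair_self: "in_pair k (gpow c k e)" by (simp add: in_pair_def)

lemma in_pair_exists: assumes "a \<in> L" obtains k where "k < q" "in_pair k a"
  using L_cases_c_orbit[OF assms] unfolding in_pair_def by metis

lemma in_pair_unique:
  assumes k: "k < q" "l < q" and a: "in_pair k a" "in_pair l a" shows "k = l"
proof -
  have L: "gpow c k e \<in> L" "gpow c l e \<in> L" using pow_apply_closed[OF c_in_G e_in_L] by auto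
  have "gpow c k e \<noteq> twin (gpow c l e)" "gpow c l e \<noteq> twin (gpow c k e)"
    using pow_orbit_twin_disjoint[OF c_in_G c_pow_q e_in_L c_moves_e] k by auto
  then have "gpow c k e = gpow c l e" using a twin_inj[OF L] by (auto simp: in_pair_def)
  then show ?thesis using inj_on_c_orbit k by (auto dest: inj_onD)
qed

lemma in_pair_same: "in_pair k x \<Longrightarrow> in_pair k y \<Longrightarrow> y = x \<or> y = twin x"
  using twin_twin[OF pow_apply_closed[OF c_in_G e_in_L]] by (auto simp: in_pair_def)

lemma in_pair_pow: assumes "in_pair k a" shows "in_pair ((n + k) mod q) (gpow c n a)"
proof -
  have eq: "gpow c n (gpow c k e) = gpow c ((n + k) mod q) e"
    using pow_apply_add[OF c_in_G e_in_L, of n k] pow_c_mod[of "n + k"] by simp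
  have "gpow c n (twin (gpow c k e)) = twin (gpow c n (gpow c k e))"
    using pow_twin[OF c_in_G pow_apply_closed[OF c_in_G e_in_L]] .
  then show ?thesis using assms eq by (auto simp: in_pair_def)
qed

lemma pair_map_injective:
  assumes t: "t \<in> carrier G" and m: "m1 < q" "m2 < q"
    and k: "in_pair k (t (gpow c m1 e))" "in_pair k (t (gpow c m2 e))"
  shows "m1 = m2"
proof -
  have L: "gpow c m1 e \<in> L" "gpow c m2 e \<in> L" using pow_apply_closed[OF c_in_G e_in_L] by auto
  have "t (gpow c m2 e) = t (gpow c m1 e) \<or> t (gpow c m2 e) = t (twin (gpow c m1 e))"
    using in_pair_same[OF k] twin_apply[OF t L(1)] by simp
  then have "gpow c m2 e = gpow c m1 e \<or> gpow c m2 e = twin (gpow c m1 e)"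
    using apply_inj[OF t] L twin_in_L by blast
  then have "in_pair m1 (gpow c m2 e)" by (simp add: in_pair_def)
  then show ?thesis using in_pair_unique[OF m] in_pair_self by blast
qed

definition acts_as_pow :: "('a \<Rightarrow> 'a) \<Rightarrow> nat \<Rightarrow> bool" where
  "acts_as_pow g i \<longleftrightarrow> (\<forall>a \<in> L. g a = gpow c i a \<or> g a = twin (gpow c i a))"

lemma acts_as_pow_of_pair_shift:
  assumes t: "t \<in> carrier G" and shift: "\<And>k. k < q \<Longrightarrow> in_pair ((j + k) mod q) (t (gpow c k e))"
  shows "acts_as_pow t j"
  unfolding acts_as_pow_def
proof
  fix a assume a: "a \<in> L"
  obtain k where k: "k < q" "in_pair k a" using in_pair_exists[OF a] .
  define y where "y = gpow c k e"
  have y: "y \<in> L" using pow_apply_closed[OF c_in_G e_in_L] by (simp add: y_def)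
  have "in_pair ((j + k) mod q) (gpow c j y)" using in_pair_pow[OF in_pair_self] by (simp add: y_def)
  then have ty: "t y = gpow c j y \<or> t y = twin (gpow c j y)"
    using in_pair_same shift[OF k(1)] y_def by blast
  from k(2) have "a = y \<or> a = twin y" by (simp add: in_pair_def y_def)
  then show "t a = gpow c j a \<or> t a = twin (gpow c j a)"
  proof
    assume "a = twin y"
    then have "t a = twin (t y)" "gpow c j a = twin (gpow c j y)"
      using twin_apply[OF t y] pow_twin[OF c_in_G y] by simp_all
    then show ?thesis
      using ty twin_twin pow_apply_closed[OF c_in_G y] by auto
  qed (use ty in blast)
qed

lemma acts_as_pow_one: "acts_as_pow one_G 0"
  by (simp add: acts_as_pow_def one_G_apply)

lemma acts_as_pow_mult:
  assumes x: "x \<in> carrier G" "acts_as_pow x i" and y: "y \<in> carrier G" "acts_as_pow y j"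
  shows "acts_as_pow (x \<star> y) (i + j)"
  unfolding acts_as_pow_def
proof
  fix a assume a: "a \<in> L"
  have b: "gpow c j a \<in> L" using pow_apply_closed[OF c_in_G a] .
  have xb: "x (gpow c j a) = gpow c (i + j) a \<or> x (gpow c j a) = twin (gpow c (i + j) a)"
    using x(2) b pow_apply_add[OF c_in_G a] by (simp add: acts_as_pow_def)
  have "y a = gpow c j a \<or> y a = twin (gpow c j a)" using y(2) a by (simp add: acts_as_pow_def)
  then show "(x \<star> y) a = gpow c (i + j) a \<or> (x \<star> y) a = twin (gpow c (i + j) a)"
  proof
    assume "y a = twin (gpow c j a)"
    then have "(x \<star> y) a = twin (x (gpow c j a))"
      using twin_apply[OF x(1) b] x(1) y(1) a by (simp add: mult_G_apply)
    then show ?thesis using xb twin_twin pow_apply_closed[OF c_in_G a] by auto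
  qed (use xb x(1) y(1) a in \<open>simp add: mult_G_apply\<close>)
qed

lemma acts_as_pow_inv:
  assumes x: "x \<in> carrier G" "acts_as_pow x i"
  shows "acts_as_pow (ginv x) ((q - 1) * i)"
  unfolding acts_as_pow_def
proof
  define J where "J = (q - 1) * i"
  have undo: "gpow c J (gpow c i b) = b" if b: "b \<in> L" for b
  proof -
    have "gpow c J (gpow c i b) = gpow c (q * i) b"
      using pow_apply_add[OF c_in_G b, of J i] q_gt_2 by (simp add: J_def algebra_simps)
    also have "gpow c (q * i) = one_G" using c_in_G c_pow_q by (simp add: G.nat_pow_pow [symmetric])
    finally show ?thesis using one_G_apply[OF b] by simp
  qed
  fix a assume a: "a \<in> L"
  define b where "b = ginv x a"
  have b: "b \<in> L" "x b = a" using x(1) a by (simp_all add: b_def apply_closed apply_inv)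
  have "x b = gpow c i b \<or> x b = twin (gpow c i b)" using x(2) b(1) by (simp add: acts_as_pow_def)
  then show "ginv x a = gpow c J a \<or> ginv x a = twin (gpow c J a)"
  proof
    assume "x b = twin (gpow c i b)"
    then have "gpow c J a = twin (gpow c J (gpow c i b))"
      using b pow_twin[OF c_in_G pow_apply_closed[OF c_in_G b(1)]] by simp
    then show ?thesis using undo[OF b(1)] twin_twin[OF b(1)] by (simp add: b_def)
  next
    assume "x b = gpow c i b"
    then have "gpow c J a = b" using undo[OF b(1)] b(2) by simp
    then show ?thesis by (simp add: b_def)
  qed
qed

context
  assumes R_f_central: "centralizer G {R f} = carrier G"
begin

lemma commute_R_f: "g \<in> carrier G \<Longrightarrow> g \<star> R f = R f \<star> g"
  using R_f_central by (auto simp: centralizer_def)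

lemma twin_eq_R_f_apply: assumes a: "a \<in> L" shows "twin a = R f a"
proof -
  have "twin a = (R a \<star> R f) e" using a by (simp add: twin_def mult_G_apply R_in_G f_in_L e_in_L R_apply_e)
  also have "\<dots> = (R f \<star> R a) e" using commute_R_f[OF R_in_G[OF a]] by simp
  also have "\<dots> = R f a" using a by (simp add: mult_G_apply R_in_G f_in_L e_in_L R_apply_e)
  finally show ?thesis .
qed

lemma R_f_square: "R f \<star> R f = one_G"
proof (rule G_eqI)
  fix a assume a: "a \<in> L"
  have "(R f \<star> R f) a = twin (twin a)"
    using a twin_in_L by (simp add: twin_eq_R_f_apply mult_G_apply R_f_in_G)
  then show "(R f \<star> R f) a = one_G a" using twin_twin[OF a] one_G_apply[OF a] by simp
qed (use R_f_in_G in simp_all)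

text \<open>Elements commuting with c are determined by their value at e: such an element fixing e
  fixes the c-orbit of e and, commuting with twin, also its complement.\<close>
lemma commute_c_eqI:
  assumes p: "p \<in> carrier G" "p \<star> c = c \<star> p" and x: "x \<in> carrier G" "x \<star> c = c \<star> x"
    and xe: "x e = p e"
  shows "x = p"
proof -
  define w where "w = ginv p \<star> x"
  have wc: "w \<in> carrier G" using w_def p x by simp
  have wcomm: "w \<star> c = c \<star> w"
    using G.commute_mult[of "ginv p" x c] G.commute_inv[of p c] p x c_in_G by (simp add: w_def)
  have we: "w e = e" using p x xe e_in_L by (simp add: w_def mult_G_apply inv_apply)
  have fix_orbit: "w (gpow c i e) = gpow c i e" for i
  proof -
    have "gpow c i \<star> w = w \<star> gpow c i" using G.group_commutes_pow[of c w i] wcomm c_in_G wc by simp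
    then have "(w \<star> gpow c i) e = (gpow c i \<star> w) e" by simp
    then show ?thesis using wc c_in_G e_in_L we by (simp add: mult_G_apply)
  qed
  have "w = one_G"
  proof (rule G_eqI[OF wc G.one_closed])
    fix a assume a: "a \<in> L"
    then obtain i where "a = gpow c i e \<or> a = twin (gpow c i e)" by (rule L_cases_c_orbit)
    then show "w a = one_G a"
    proof
      assume "a = twin (gpow c i e)"
      then have "w a = twin (w (gpow c i e))"
        using twin_apply[OF wc pow_apply_closed[OF c_in_G e_in_L]] by simp
      then show ?thesis using fix_orbit \<open>a = twin (gpow c i e)\<close> one_G_apply[OF a] by simp
    qed (use fix_orbit one_G_apply[OF a] in simp)
  qed
  moreover have "p \<star> w = x" using p x by (simp add: w_def)
  ultimately show ?thesis using p by simp
qed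

lemma commute_c_cases:
  assumes x: "x \<in> carrier G" "x \<star> c = c \<star> x"
  shows "\<exists>i. x = gpow c i \<or> x = R f \<star> gpow c i"
proof -
  obtain i where i: "x e = gpow c i e \<or> x e = twin (gpow c i e)"
    using L_cases_c_orbit[OF apply_closed[OF x(1) e_in_L]] by metis
  have pc: "gpow c i \<star> c = c \<star> gpow c i" using G.nat_pow_comm[of c i 1] c_in_G by simp
  from i show ?thesis
  proof
    assume "x e = gpow c i e"
    then have "x = gpow c i" using commute_c_eqI[of "gpow c i" x] pc x c_in_G by simp
    then show ?thesis by blast
  next
    assume xe: "x e = twin (gpow c i e)"
    have p: "R f \<star> gpow c i \<in> carrier G" using R_f_in_G c_in_G by simp
    have pcm: "(R f \<star> gpow c i) \<star> c = c \<star> (R f \<star> gpow c i)"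
      using G.commute_mult[of "R f" "gpow c i" c] R_f_in_G c_in_G pc commute_R_f[OF c_in_G] by simp
    have "(R f \<star> gpow c i) e = twin (gpow c i e)"
      using twin_eq_R_f_apply pow_apply_closed[OF c_in_G e_in_L] c_in_G R_f_in_G e_in_L
      by (simp add: mult_G_apply)
    then have "x = R f \<star> gpow c i" using commute_c_eqI[OF p pcm x] xe by simp
    then show ?thesis by blast
  qed
qed

lemma commute_conj_c_cases:
  assumes a: "a \<in> conj_class_c" and x: "x \<in> carrier G" "x \<star> a = a \<star> x"
  shows "\<exists>i. x = gpow a i \<or> x = R f \<star> gpow a i"
proof -
  obtain g where g: "g \<in> carrier G" "a = g \<star> c \<star> ginv g" using a by (auto simp: conj_class_c_def)
  define x' where "x' = ginv g \<star> x \<star> g"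
  have x'c: "x' \<in> carrier G" using x'_def g x by simp
  have xx: "x = g \<star> x' \<star> ginv g" using x'_def g x by (simp add: G.m_assoc)
  have "x' \<star> c = c \<star> x'"
    using G.conj_commute_iff[OF g(1) x'c c_in_G] x(2) g(2) xx by simp
  then obtain i where i: "x' = gpow c i \<or> x' = R f \<star> gpow c i" using commute_c_cases x'c by blast
  have "g \<star> gpow c i \<star> ginv g = gpow a i" using G.pow_conj[OF g(1) c_in_G] g(2) by simp
  moreover have "g \<star> (R f \<star> gpow c i) \<star> ginv g = R f \<star> (g \<star> gpow c i \<star> ginv g)"
    using commute_R_f[OF g(1)] g(1) R_f_in_G c_in_G by (simp add: G.m_assoc [symmetric])
  ultimately show ?thesis using i xx by auto
qed

lemma square_eq_pow:
  assumes a: "a \<in> carrier G" and x: "x = gpow a i \<or> x = R f \<star> gpow a i"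
  shows "x \<star> x = gpow a (i + i)"
  using x
proof
  assume "x = R f \<star> gpow a i"
  then have "x \<star> x = R f \<star> (gpow a i \<star> R f) \<star> gpow a i" using a R_f_in_G by (simp add: G.m_assoc)
  also have "\<dots> = (R f \<star> R f) \<star> (gpow a i \<star> gpow a i)"
    using commute_R_f[of "gpow a i"] a R_f_in_G by (simp add: G.m_assoc)
  finally show ?thesis using R_f_square a by (simp add: G.nat_pow_mult)
qed (use a in \<open>simp add: G.nat_pow_mult\<close>)

lemma T_centralizer_inter_conj:
  assumes a: "a \<in> conj_class_c" and b: "b \<in> conj_class_c" and nb: "\<forall>k. b \<noteq> gpow a k"
    and xa: "x \<in> T_centralizer a" and xb: "x \<in> T_centralizer b"
  shows "x = one_G \<or> x = R f"
proof -
  note ac = conj_class_c_order_q[OF a] and bc = conj_class_c_order_q[OF b]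
  have xc: "x \<in> carrier G" using xa T_centralizer_subset T_subset_G by blast
  obtain i where i: "x = gpow a i \<or> x = R f \<star> gpow a i"
    using commute_conj_c_cases[OF a xc] xa by (auto simp: T_centralizer_def)
  obtain j where j: "x = gpow b j \<or> x = R f \<star> gpow b j"
    using commute_conj_c_cases[OF b xc] xb by (auto simp: T_centralizer_def)
  show ?thesis
  proof (cases "q dvd i \<or> q dvd j")
    case True
    then have "gpow a i = one_G \<or> gpow b j = one_G"
      using G.pow_mod_period[OF ac(1,2), of i] G.pow_mod_period[OF bc(1,2), of j] by auto
    then show ?thesis using i j R_f_in_G by auto
  next
    case False
    then have "\<not> q dvd (j + j)" using not_dvd_double by blast
    then obtain u :: nat where "b = gpow (gpow b (j + j)) u"
      using G.generated_by_prime_pow[OF prime_q bc(1,2)] by blast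
    moreover have "gpow b (j + j) = gpow a (i + i)"
      using square_eq_pow[OF ac(1) i] square_eq_pow[OF bc(1) j] by simp
    ultimately have "b = gpow a ((i + i) * u)" using ac(1) by (simp add: G.nat_pow_pow)
    then show ?thesis using nb by blast
  qed
qed

lemma commute_c_of_T:
  assumes T_comm: "\<forall>t \<in> T. t \<star> c = c \<star> t" and g: "g \<in> carrier G"
  shows "g \<star> c = c \<star> g"
  using g
proof (induction rule: generated_induct)
  case (inv_T t) then show ?case using G.commute_inv T_comm T_subset_G c_in_G by blast
next
  case (mult x y) then show ?case using G.commute_mult c_in_G by blast
qed (use T_comm c_in_G in auto)

lemma R_f_neq_one: "R f \<noteq> one_G"
  using R_apply_e[OF f_in_L] one_G_apply[OF e_in_L] f_neq_e by auto

lemma R_f_in_T_centralizer: "a \<in> carrier G \<Longrightarrow> R f \<in> T_centralizer a"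
  using R_in_T[OF f_in_L] commute_R_f by (simp add: T_centralizer_def)

lemma card_T_centralizer_minus:
  assumes "a \<in> conj_class_c" shows "q - 2 \<le> card (T_centralizer a - {one_G, R f})"
proof -
  have "card (T_centralizer a) - card {one_G, R f} \<le> card (T_centralizer a - {one_G, R f})"
    by (rule diff_card_le_card_Diff) simp
  moreover have "card {one_G, R f} \<le> 2" by (simp add: card_insert_if)
  ultimately show ?thesis
    using card_T_centralizer[OF conj_class_c_order_q(1,2)[OF assms]] by linarith
qed

lemma T_centralizer_minus_nonempty:
  assumes "a \<in> conj_class_c" shows "T_centralizer a - {one_G, R f} \<noteq> {}"
proof -
  have "0 < card (T_centralizer a - {one_G, R f})" using card_T_centralizer_minus[OF assms] q_gt_2 by simp
  then show ?thesis by (metis card.empty less_irrefl)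
qed

lemma T_centralizer_minus_subset:
  assumes "a \<in> conj_class_c" "b \<in> conj_class_c" "\<forall>k. b \<noteq> gpow a k"
  shows "T_centralizer b - {one_G, R f} \<subseteq> T - T_centralizer a"
  using T_centralizer_inter_conj[OF assms] T_centralizer_subset by blast

lemma T_minus_centralizer_c_minimal:
  assumes S: "S \<subseteq> T - T_centralizer c" "S \<noteq> {}"
    and closed: "\<And>t. t \<in> S \<Longrightarrow> c \<star> t \<star> ginv c \<in> S"
  shows "T - T_centralizer c \<subseteq> S"
proof -
  obtain s where s: "s \<in> S" using S(2) by blast
  have "gpow c i \<star> t \<star> ginv (gpow c i) \<in> S" if "t \<in> S" for i t
    using that
  proof (induction i arbitrary: t)
    case (Suc i)
    have tc: "t \<in> carrier G" using Suc.prems S(1) T_subset_G by blast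
    have "gpow c (Suc i) \<star> t \<star> ginv (gpow c (Suc i)) = gpow c i \<star> (c \<star> t \<star> ginv c) \<star> ginv (gpow c i)"
      using G.conj_conj[of "gpow c i" c t] c_in_G tc by simp
    then show ?case using Suc.IH closed[OF Suc.prems] by simp
  qed (use S(1) T_subset_G in auto)
  then have "conj_orbit c s \<subseteq> S" using s by (auto simp: conj_orbit_def)
  then show ?thesis using T_minus_centralizer_eq_orbit[OF c_in_G c_pow_q] s S(1) by blast
qed

lemma conj_preserves_T_centralizer_minus:
  assumes a: "a \<in> conj_class_c" and x: "x \<in> carrier G"
    and k: "x \<star> a \<star> ginv x = gpow a k" "\<not> q dvd k"
    and t: "t \<in> T_centralizer a - {one_G, R f}"
  shows "x \<star> t \<star> ginv x \<in> T_centralizer a - {one_G, R f}"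
proof -
  note a_order = conj_class_c_order_q[OF a]
  have tT: "t \<in> T" and tc: "t \<in> carrier G" using t T_subset_G by (auto simp: T_centralizer_def)
  have "t \<star> a = a \<star> t" using t by (simp add: T_centralizer_def)
  then have "(x \<star> t \<star> ginv x) \<star> gpow a k = gpow a k \<star> (x \<star> t \<star> ginv x)"
    using G.conj_commute_iff[OF x tc a_order(1)] k(1) by simp
  then have "(x \<star> t \<star> ginv x) \<star> a = a \<star> (x \<star> t \<star> ginv x)"
    using G.commute_of_commute_prime_pow[OF prime_q a_order(1) _ a_order(2) k(2)] x tc
    by (metis G.inv_closed G.m_closed)
  moreover have "x \<star> t \<star> ginv x \<in> T" using T_conj_closed[OF x tT] .
  moreover have "x \<star> t \<star> ginv x \<noteq> one_G"
    using G.conj_eq_commuting_imp_eq[OF x tc G.one_closed] x t by auto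
  moreover have "x \<star> t \<star> ginv x \<noteq> R f"
    using G.conj_eq_commuting_imp_eq[OF x tc R_f_in_G] commute_R_f[OF x] t by auto
  ultimately show ?thesis by (simp add: T_centralizer_def)
qed

text \<open>If c c' c^-1 were a power of c', conjugation by c would permute the nontrivial elements of
  T commuting with c', which lie in T - T_centralizer c; being a single orbit, the latter would then
  lie in T_centralizer c', making it too large.\<close>
lemma conj_by_c_not_pow:
  assumes c': "c' \<in> conj_class_c" "\<forall>k. c' \<noteq> gpow c k"
  shows "c \<star> c' \<star> ginv c \<noteq> gpow c' k"
proof
  note c'_order = conj_class_c_order_q[OF c'(1)]
  assume h: "c \<star> c' \<star> ginv c = gpow c' k"
  have "\<not> q dvd k"
  proof
    assume "q dvd k"
    then have "gpow c' k = one_G" using G.pow_mod_period[OF c'_order(1,2), of k] by simp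
    then show False using h conj_class_c_closed[OF c_in_G c'(1)] conj_class_c_order_q(3) by metis
  qed
  define S where "S = T_centralizer c' - {one_G, R f}"
  have S: "S \<subseteq> T - T_centralizer c" "S \<noteq> {}"
    using T_centralizer_minus_subset[OF c_in_conj_class c'] T_centralizer_minus_nonempty[OF c'(1)]
    by (simp_all add: S_def)
  have "c \<star> t \<star> ginv c \<in> S" if "t \<in> S" for t
    using conj_preserves_T_centralizer_minus[OF c'(1) c_in_G h \<open>\<not> q dvd k\<close>] that
    by (simp add: S_def)
  then have "T - T_centralizer c \<subseteq> S" using T_minus_centralizer_c_minimal[OF S] by blast
  then have sub: "(T - T_centralizer c) \<union> {one_G, R f} \<subseteq> T_centralizer c'"
    using one_in_T_centralizer R_f_in_T_centralizer c'_order(1) by (auto simp: S_def)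
  have "(T - T_centralizer c) \<inter> {one_G, R f} = {}"
    using one_in_T_centralizer R_f_in_T_centralizer c_in_G by auto
  moreover have "card (T - T_centralizer c) = q"
    using card_T_minus_centralizer[OF c_in_G c_pow_q] S by blast
  ultimately have "card ((T - T_centralizer c) \<union> {one_G, R f}) = q + 2"
    using R_f_neq_one finite_T by (simp add: card_Un_disjoint)
  then have big: "q + 2 \<le> card (T_centralizer c')" using card_mono[OF finite_T_centralizer sub] by simp
  have "\<forall>k. c \<noteq> gpow c' k"
    using G.not_pow_sym[OF prime_q c'_order(1,2) c_neq_one] c'(2) by blast
  then have "T - T_centralizer c' \<noteq> {}"
    using T_centralizer_minus_subset[OF c'(1) c_in_conj_class]
      T_centralizer_minus_nonempty[OF c_in_conj_class] by blast
  then show False using card_T_centralizer_eq[OF c'_order(1,2)] big by simp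
qed

text \<open>For q \<ge> 5, two conjugates c', c c' c^-1 of c outside the cyclic group of c would give
  two disjoint sets of at least q - 2 elements inside the q-element set T - T_centralizer c.\<close>
lemma conj_c_in_cyclic_of_central:
  assumes q: "q \<noteq> 3" and g: "g \<in> carrier G"
  shows "\<exists>i. g \<star> c \<star> ginv g = gpow c i"
proof (rule ccontr)
  define c' where "c' = g \<star> c \<star> ginv g"
  define c'' where "c'' = c \<star> c' \<star> ginv c"
  have c': "c' \<in> conj_class_c" using g by (auto simp: c'_def conj_class_c_def)
  have c'': "c'' \<in> conj_class_c" using conj_class_c_closed[OF c_in_G c'] by (simp add: c''_def)
  assume "\<nexists>i. g \<star> c \<star> ginv g = gpow c i"
  then have n1: "\<forall>k. c' \<noteq> gpow c k" by (simp add: c'_def)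
  have n2: "\<forall>k. c'' \<noteq> gpow c k"
  proof (intro allI notI)
    fix k assume "c'' = gpow c k"
    then have "c' = gpow c k"
      using G.conj_eq_commuting_imp_eq[OF c_in_G conj_class_c_order_q(1)[OF c'], of "gpow c k"]
        c_in_G G.nat_pow_comm[of c k 1] by (simp add: c''_def)
    then show False using n1 by blast
  qed
  have n3: "\<forall>k. c'' \<noteq> gpow c' k" using conj_by_c_not_pow[OF c' n1] by (simp add: c''_def)
  have "T - T_centralizer c \<noteq> {}"
  proof
    assume "T - T_centralizer c = {}"
    then have "g \<star> c = c \<star> g"
      using commute_c_of_T[OF _ g] by (auto simp: T_centralizer_def)
    then have "c' = gpow c 1" using G.conj_eq_iff_commute[OF g c_in_G] c_in_G by (simp add: c'_def)
    then show False using n1 by blast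
  qed
  then have cT: "card (T - T_centralizer c) = q" using card_T_minus_centralizer[OF c_in_G c_pow_q] by blast
  define S' where "S' = T_centralizer c' - {one_G, R f}"
  define S'' where "S'' = T_centralizer c'' - {one_G, R f}"
  have "S' \<union> S'' \<subseteq> T - T_centralizer c"
    using T_centralizer_minus_subset[OF c_in_conj_class] c' c'' n1 n2
    by (auto simp: S'_def S''_def)
  then have "card (S' \<union> S'') \<le> q" using cT card_mono[of "T - T_centralizer c"] finite_T by fastforce
  moreover have "S' \<inter> S'' = {}"
    using T_centralizer_inter_conj[OF c' c'' n3] by (auto simp: S'_def S''_def)
  then have "card (S' \<union> S'') = card S' + card S''"
    using finite_T_centralizer by (simp add: card_Un_disjoint S'_def S''_def)
  moreover have "q - 2 \<le> card S'" "q - 2 \<le> card S''"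
    using card_T_centralizer_minus c' c'' by (auto simp: S'_def S''_def)
  moreover have "q \<noteq> 4" using odd_q by auto
  then have "5 \<le> q" using q q_gt_2 by linarith
  ultimately show False by linarith
qed

lemma T_moves_pairs:
  assumes t: "t \<in> T" "t \<noteq> one_G" "t \<noteq> R f" and a: "a \<in> L"
  shows "t a \<noteq> a" and "t a \<noteq> twin a"
proof -
  define g where "g = R a"
  have gc: "g \<in> carrier G" using R_in_G[OF a] by (simp add: g_def)
  have tc: "t \<in> carrier G" using t T_subset_G by blast
  define s where "s = ginv g \<star> t \<star> g"
  have sT: "s \<in> T" using T_conj_closed[of "ginv g" t] gc t by (simp add: s_def)
  have ga: "g e = a" using R_apply_e[OF a] by (simp add: g_def)
  have se: "s e = ginv g (t a)" using gc tc e_in_L ga a by (simp add: s_def mult_G_apply)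
  have t_eq: "t = g \<star> s \<star> ginv g" using gc tc by (simp add: s_def G.m_assoc)
  show "t a \<noteq> a"
  proof
    assume "t a = a"
    then have "s e = one_G e" using se inv_apply[OF gc e_in_L] ga one_G_apply[OF e_in_L] by simp
    then have "s = one_G" using T_eqI[OF sT one_in_T] by simp
    then show False using t_eq gc t(2) by simp
  qed
  show "t a \<noteq> twin a"
  proof
    assume "t a = twin a"
    then have "s e = ginv g (twin a)" using se by simp
    also have "\<dots> = twin (ginv g a)" using twin_apply[of "ginv g" a] gc a by simp
    also have "ginv g a = e" using inv_apply[OF gc e_in_L] ga by simp
    finally have "s e = R f e" using twin_e R_apply_e[OF f_in_L] by simp
    then have "s = R f" using T_eqI[OF sT R_in_T[OF f_in_L]] by simp
    then have "t = R f" using t_eq gc commute_R_f[OF gc] R_f_in_G by (simp add: G.m_assoc)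
    then show False using t(3) by simp
  qed
qed

text \<open>With q = 3 a generator t other than 1 and R f permutes the three pairs without fixing one,
  i.e. cyclically, exactly as some power of c does.\<close>
lemma T_acts_as_pow_q3:
  assumes q3: "q = 3" and t: "t \<in> T" "t \<noteq> one_G" "t \<noteq> R f"
  shows "\<exists>j. acts_as_pow t j"
proof -
  have tc: "t \<in> carrier G" using t T_subset_G by blast
  have pL: "gpow c k e \<in> L" for k using pow_apply_closed[OF c_in_G e_in_L] .
  have "\<exists>k<q. in_pair k (t (gpow c m e))" for m using in_pair_exists apply_closed[OF tc pL] by metis
  then obtain \<sigma> where \<sigma>: "\<And>m. \<sigma> m < q" "\<And>m. in_pair (\<sigma> m) (t (gpow c m e))" by metis
  have no_fix: "\<sigma> m \<noteq> m" for m
  proof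
    assume "\<sigma> m = m"
    then have "t (gpow c m e) = gpow c m e \<or> t (gpow c m e) = twin (gpow c m e)"
      using in_pair_same[OF in_pair_self] \<sigma>(2)[of m] by simp
    then show False using T_moves_pairs[OF t pL] by blast
  qed
  have inj: "\<sigma> m1 \<noteq> \<sigma> m2" if "m1 < q" "m2 < q" "m1 \<noteq> m2" for m1 m2
    using pair_map_injective[OF tc that(1,2)] \<sigma>(2) that(3) by metis
  have lt: "\<sigma> 0 < 3" "\<sigma> 1 < 3" "\<sigma> 2 < 3" using \<sigma>(1) q3 by auto
  have ne: "\<sigma> 0 \<noteq> \<sigma> 1" "\<sigma> 0 \<noteq> \<sigma> 2" "\<sigma> 1 \<noteq> \<sigma> 2" using inj q3 by auto
  have "\<sigma> 1 = (\<sigma> 0 + 1) mod 3 \<and> \<sigma> 2 = (\<sigma> 0 + 2) mod 3"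
  proof (cases "\<sigma> 0 = 1")
    case True
    then have "\<sigma> 1 = 2" "\<sigma> 2 = 0" using lt ne no_fix[of 1] no_fix[of 2] by linarith+
    then show ?thesis using True by simp
  next
    case False
    then have "\<sigma> 0 = 2" using lt no_fix[of 0] by linarith
    then have "\<sigma> 1 = 0" "\<sigma> 2 = 1" using lt ne no_fix[of 1] no_fix[of 2] by linarith+
    then show ?thesis using \<open>\<sigma> 0 = 2\<close> by simp
  qed
  moreover have "k = 0 \<or> k = 1 \<or> k = 2" if "k < q" for k using that q3 by auto
  ultimately have shift: "\<sigma> k = (\<sigma> 0 + k) mod q" if "k < q" for k
    using that q3 lt(1) by fastforce
  show ?thesis using acts_as_pow_of_pair_shift[OF tc] \<sigma>(2) shift by metis
qed

lemma acts_as_pow_R_f: "acts_as_pow (R f) 0"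
  by (simp add: acts_as_pow_def twin_eq_R_f_apply one_G_apply)

lemma acts_as_pow_all_q3:
  assumes q3: "q = 3" and g: "g \<in> carrier G" shows "\<exists>i. acts_as_pow g i"
  using g
proof (induction rule: generated_induct)
  case (T t)
  then show ?case
    using T_acts_as_pow_q3[OF q3] acts_as_pow_one acts_as_pow_R_f by blast
next
  case (inv_T t)
  then show ?case
    using T_acts_as_pow_q3[OF q3] acts_as_pow_one acts_as_pow_R_f
      acts_as_pow_inv T_subset_G by (metis G.inv_one G.one_closed subsetD R_f_in_G)
next
  case (mult x y)
  then show ?case using acts_as_pow_mult by blast
qed (use acts_as_pow_one in blast)

text \<open>For q = 3 every element maps twin pairs to twin pairs as a power of c does; the block
  stabiliser K is then the kernel of the action on pairs, hence normal, against N_G(K) = K.\<close>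
lemma q_neq_3: "q \<noteq> 3"
proof
  assume q3: "q = 3"
  have K_fix: "k a = a \<or> k a = twin a" if k: "k \<in> K" and a: "a \<in> L" for k a
  proof -
    have kc: "k \<in> carrier G" and ke: "k e = e \<or> k e = twin e" using k twin_e by (auto simp: mem_K_iff)
    obtain i where i: "acts_as_pow k i" using acts_as_pow_all_q3[OF q3 kc] by blast
    have "q dvd i"
    proof (rule ccontr)
      assume "\<not> q dvd i"
      then have np: "gpow c i e \<noteq> e" "gpow c i e \<noteq> twin e"
        using order_q_pow_moves[OF c_order_q _ e_in_L] by blast+
      have "k e = gpow c i e \<or> k e = twin (gpow c i e)" using i e_in_L by (simp add: acts_as_pow_def)
      then show False
        using ke np twin_twin[OF e_in_L] twin_twin[OF pow_apply_closed[OF c_in_G e_in_L]] by metis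
    qed
    then have "gpow c i = one_G" using pow_c_mod[of i] by simp
    then show ?thesis using i a one_G_apply[OF a] by (auto simp: acts_as_pow_def)
  qed
  have "g \<star> k \<star> ginv g \<in> K" if g: "g \<in> carrier G" and k: "k \<in> K" for g k
  proof -
    have kc: "k \<in> carrier G" using k K_subset_G by blast
    define a where "a = ginv g e"
    have a: "a \<in> L" "g a = e" using g e_in_L by (simp_all add: a_def apply_closed apply_inv)
    have "(g \<star> k \<star> ginv g) e = g (k a)" using g kc e_in_L by (simp add: a_def mult_G_apply apply_closed)
    moreover have "g (twin a) = f" using twin_apply[OF g a(1)] a(2) twin_e by simp
    ultimately show ?thesis using K_fix[OF k a(1)] a(2) g kc by (auto simp: mem_K_iff)
  qed
  then have "K \<lhd> G" using G.normal_inv_iff subgroup_K by blast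
  then show False using G.normalizer_of_normal normalizer_K K_psubset_G by simp
qed

end

theorem HM_index_two_holds: HM_index_two
proof (cases "centralizer G {R f} = carrier G")
  case True
  then show ?thesis
    using HM_index_two_of_cyclic_normal conj_c_in_cyclic_of_central q_neq_3 by blast
qed (rule HM_index_two_R_f_not_central)

end

theorem proposition5p12:
  fixes L :: "'a set" and m :: "'a \<Rightarrow> 'a \<Rightarrow> 'a" and e :: 'a
    and q :: nat and K :: "('a \<Rightarrow> 'a) set"
  assumes "Factorial_Ring.prime q" and "odd q"
    and "rcc_loop L m e"
    and "card L = 2 * q"
    and "subgroup K (env_G L m)"
    and "env_H L m e \<subset> K" and "K \<subset> carrier (env_G L m)"
    and "card (carrier (env_G L m)) = q * card K"
    and "card K = 2 * card (env_H L m e)"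
    and "normalizer (env_G L m) K = K"
  shows "\<exists>M. M \<lhd> env_G L m \<and>
           card (carrier (env_G L m)) = 2 * card (env_H L m e <#>\<^bsub>env_G L m\<^esub> M)"
proof -
  have "finite L" using assms(4) prime_gt_1_nat[OF assms(1)] card.infinite by fastforce
  moreover have "is_loop L m e"
    and "\<And>g t. g \<in> carrier (env_G L m) \<Longrightarrow> t \<in> env_T L m
      \<Longrightarrow> g \<otimes>\<^bsub>env_G L m\<^esub> t \<otimes>\<^bsub>env_G L m\<^esub> inv\<^bsub>env_G L m\<^esub> g \<in> env_T L m"
    using assms(3) by (auto simp: rcc_loop_def)
  ultimately interpret rcc_envelope_2q L m e q K
    using assms(1,2,4-10) by (intro rcc_envelope_2q.intro rcc_envelope.intro loop_envelope.intro
        rcc_envelope_axioms.intro rcc_envelope_2q_axioms.intro)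
  show ?thesis by (rule HM_index_two_holds)
qed
end
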